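(* Consider the following cooperative multi-player multi-armed bandit problem ("Problem A"). There are $M$ players $P_1,\dots,P_M$; player $P_i$ has a finite set $\mathcal{K}_i=\{1,\dots,K_i\}$ of arms. At each round $t=1,\dots,T$ each player $P_i$ picks an arm $a_i(t)\in\mathcal{K}_i$, giving the arm-tuple $a(t)=(a_1(t),\dots,a_M(t))$. For each arm-tuple $a\in\mathcal{K}_1\times\cdots\times\mathcal{K}_M$ there is an unknown $1$-subgaussian distribution $F_a$ supported in $[0,1]$ with mean $\mu_a$; when $a(t)$ is played, a reward $X_{a(t)}(t)\sim F_{a(t)}$ is drawn independently across rounds and this common reward is observed by all players. No player observes the arms chosen by the others and there is no communication during play. Let $\mu^*=\max_a\mu_a$, $\Delta_a=\mu^*-\mu_a$, and $R_T=\mathbb{E}\big[T\mu^*-\sum_{t=1}^T X_{a(t)}(t)\big]$. Suppose every player runs the \texttt{mUCB} algorithm: in the first $K_1\cdots K_M$ rounds, player $P_i$ starts at its arm $1$ and successively pulls each of its arms $K_{i+1}\cdots K_M$ consecutive times before moving to the next arm, repeating this epoch $K_1\cdots K_{i-1}$ times (so every tuple is played once); afterwards, at round $t$, each player computes for each tuple $a$ the index $\eta_a(t)=\infty$ if $n_a(t)=0$ and otherwise $\eta_a(t)=\hat\mu_a(t)+\sqrt{2\log(1/\delta)/n_a(t)}$ with $\delta=1/t^2$, where $n_a(t)$ is the number of times tuple $a$ was played in the first $t$ rounds and $\hat\mu_a(t)$ the average of the corresponding rewards, and player $P_i$ plays the $i$-th component of a maximizing tuple, ties broken in favour of the lexicographically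 smallest tuple. Let $\epsilon=\sqrt{\log T/T}$. Then $$R_T\le 3K_1\cdots K_M+\Big(1+\sum_{a:\,\Delta_a>\epsilon}(6+4\sqrt2)\Big)\sqrt{T\log T}.$$
   Context: Lexicographic order: $(x_1,\dots,x_M)<(y_1,\dots,y_M)$ iff there is $n$ with $x_j=y_j$ for all $j<n$ and $x_n<y_n$. *)

theory Defs
  imports "HOL-Probability.Probability"
begin

text \<open>Players are indexed 0..M-1 where M = length Ks; player i has arms {1..Ks!i}.
  An arm-tuple is a list a of length M with 1 \<le> a!i \<le> Ks!i.\<close>

definition arm_tuples :: "nat list \<Rightarrow> nat list set" where
  "arm_tuples Ks = {a. length a = length Ks \<and> (\<forall>i<length Ks. 1 \<le> a!i \<and> a!i \<le> Ks!i)}"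

definition lex_less :: "nat list \<Rightarrow> nat list \<Rightarrow> bool" where
  "lex_less x y \<longleftrightarrow> (\<exists>n<length x. (\<forall>j<n. x!j = y!j) \<and> x!n < y!n)"

definition init_arm :: "nat list \<Rightarrow> nat \<Rightarrow> nat \<Rightarrow> nat" where
  "init_arm Ks i t = ((t - 1) div prod_list (drop (Suc i) Ks)) mod (Ks!i) + 1"

text \<open>History h = list of the tuples played in rounds 1..length h (h!(s-1) is a(s));
  r a s is the reward of tuple a at round s.\<close>
definition play_count :: "nat list list \<Rightarrow> nat list \<Rightarrow> nat" where
  "play_count h a = card {s\<in>{1..length h}. h!(s-1) = a}"

definition emp_mean :: "(nat list \<Rightarrow> nat \<Rightarrow> real) \<Rightarrow> nat list list \<Rightarrow> nat list \<Rightarrow> real" where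
  "emp_mean r h a = (\<Sum>s | s\<in>{1..length h} \<and> h!(s-1) = a. r a s) / real (play_count h a)"

definition ucb_index :: "(nat list \<Rightarrow> nat \<Rightarrow> real) \<Rightarrow> nat list list \<Rightarrow> nat list \<Rightarrow> ereal" where
  "ucb_index r h a =
     (if play_count h a = 0 then \<infinity>
      else ereal (emp_mean r h a +
             sqrt (2 * ln (1 / (1 / real (length h)^2)) / real (play_count h a))))"

definition ucb_best :: "nat list \<Rightarrow> (nat list \<Rightarrow> nat \<Rightarrow> real) \<Rightarrow> nat list list \<Rightarrow> nat list" where
  "ucb_best Ks r h = (THE a. a \<in> arm_tuples Ks \<and>
      (\<forall>b\<in>arm_tuples Ks. ucb_index r h b \<le> ucb_index r h a) \<and>
      (\<forall>b\<in>arm_tuples Ks. ucb_index r h b = ucb_index r h a \<longrightarrow> b = a \<or> lex_less a b))"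

text \<open>Arm chosen by player i at round length h + 1, given the history h.\<close>
definition player_arm :: "nat list \<Rightarrow> (nat list \<Rightarrow> nat \<Rightarrow> real) \<Rightarrow> nat list list \<Rightarrow> nat \<Rightarrow> nat" where
  "player_arm Ks r h i =
     (if length h + 1 \<le> prod_list Ks then init_arm Ks i (length h + 1)
      else ucb_best Ks r h ! i)"

definition next_tuple :: "nat list \<Rightarrow> (nat list \<Rightarrow> nat \<Rightarrow> real) \<Rightarrow> nat list list \<Rightarrow> nat list" where
  "next_tuple Ks r h = map (player_arm Ks r h) [0..<length Ks]"

primrec mucb_hist :: "nat list \<Rightarrow> (nat list \<Rightarrow> nat \<Rightarrow> real) \<Rightarrow> nat \<Rightarrow> nat list list" where
  "mucb_hist Ks r 0 = []"
| "mucb_hist Ks r (Suc t) = mucb_hist Ks r t @ [next_tuple Ks r (mucb_hist Ks r t)]"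

text \<open>Arm-tuple a(t) played at round t \<ge> 1 when all players run mUCB.\<close>
definition mucb_action :: "nat list \<Rightarrow> (nat list \<Rightarrow> nat \<Rightarrow> real) \<Rightarrow> nat \<Rightarrow> nat list" where
  "mucb_action Ks r t = next_tuple Ks r (mucb_hist Ks r (t - 1))"

definition subgaussian :: "real \<Rightarrow> real measure \<Rightarrow> bool" where
  "subgaussian \<sigma> F \<longleftrightarrow> integrable F (\<lambda>x. x) \<and>
     (\<forall>l::real. integrable F (\<lambda>x. exp (l * (x - (\<integral>y. y \<partial>F)))) \<and>
        (\<integral>x. exp (l * (x - (\<integral>y. y \<partial>F))) \<partial>F) \<le> exp (\<sigma>\<^sup>2 * l\<^sup>2 / 2))"

end

theory Submission
  imports Defs
begin

text \<open>
  The \<open>K = K\<^sub>1 * ... * K\<^sub>M\<close> initialisation rounds cost at most \<open>K\<close>. Afterwards all players compute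
  the same indices, so the team acts as a single UCB agent on the \<open>K\<close> arm tuples, whose index
  exceeds the empirical mean of \<open>n\<close> rewards by \<open>sqrt (4 * n * ln t) / n\<close>.
  The gap of round \<open>t + 1\<close> is charged to \<open>\<epsilon>\<close> if it is at most \<open>\<epsilon>\<close>; otherwise either the first
  \<open>n\<close> rewards of an optimal tuple fall below their mean by \<open>sqrt (4 * n * ln t)\<close> for some \<open>n \<le> t\<close>, or
  the first \<open>n\<close> rewards of the chosen tuple \<open>a\<close>, where \<open>n\<close> is its current play count, exceed their
  mean by \<open>n * \<Delta> a - sqrt (4 * n * ln T)\<close>. By Hoeffding's inequality the first kind of event has
  probability at most \<open>t^-8\<close>, and the second at most \<open>T^-4\<close> once \<open>n \<ge> (6 + 4 * sqrt 2) * ln T / \<Delta> a\<^sup>2\<close>;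
  hence a tuple with \<open>\<Delta> a > \<epsilon>\<close> costs at most \<open>2 + (6 + 4 * sqrt 2) * ln T / \<epsilon>\<close>, and with
  \<open>\<epsilon> = sqrt (ln T / T)\<close> both \<open>\<epsilon> * T\<close> and \<open>ln T / \<epsilon>\<close> equal \<open>sqrt (T * ln T)\<close>.

  Since the rounds in which a tuple is played are random, the concentration of its first \<open>n\<close> rewards
  is proved with the exponential supermartingale formed by the factors
  \<open>exp (l * (X - \<mu>) - l\<^sup>2 / 8)\<close> of those rounds: whether a round contributes is decided by the earlier
  rewards, which are independent of the rewards of that round. Only the support of the rewards in
  \<open>[0, 1]\<close> enters, through Hoeffding's lemma.
\<close>

lemma arm_tuples_Nil: "arm_tuples [] = {[]}"
  by (auto simp: arm_tuples_def)

lemma arm_tuples_Cons: "arm_tuples (k # Ks) = (\<lambda>(x, xs). x # xs) ` ({1..k} \<times> arm_tuples Ks)"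
proof (rule set_eqI, rule iffI)
  fix a assume a: "a \<in> arm_tuples (k # Ks)"
  then obtain x xs where "a = x # xs" unfolding arm_tuples_def by (cases a) auto
  moreover have "x \<in> {1..k}" "xs \<in> arm_tuples Ks"
    using a \<open>a = x # xs\<close> unfolding arm_tuples_def by force+
  ultimately show "a \<in> (\<lambda>(x, xs). x # xs) ` ({1..k} \<times> arm_tuples Ks)" by force
qed (auto simp: arm_tuples_def nth_Cons split: nat.split)

lemma arm_tuples_finite: "finite (arm_tuples Ks)"
  by (induction Ks) (simp_all add: arm_tuples_Nil arm_tuples_Cons)

lemma card_arm_tuples: "card (arm_tuples Ks) = prod_list Ks"
proof (induction Ks)
  case (Cons k Ks)
  have "inj_on (\<lambda>(x, xs). x # xs) ({1..k} \<times> arm_tuples Ks)"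
    by (auto simp: inj_on_def)
  then show ?case
    by (simp add: arm_tuples_Cons card_image card_cartesian_product Cons.IH)
qed (simp add: arm_tuples_Nil)

lemma card_less_prod_list:
  assumes "A \<subseteq> arm_tuples Ks" "x \<in> arm_tuples Ks" "x \<notin> A"
  shows "card A < prod_list Ks"
  using psubset_card_mono[OF arm_tuples_finite, of A Ks] assms by (auto simp: card_arm_tuples)

lemma length_arm_tuple: "a \<in> arm_tuples Ks \<Longrightarrow> length a = length Ks"
  by (simp add: arm_tuples_def)

lemma lex_less_irrefl: "\<not> lex_less x x"
  by (auto simp: lex_less_def)

lemma lex_less_trans: "lex_less x y \<Longrightarrow> lex_less y z \<Longrightarrow> lex_less x z"
proof -
  assume "lex_less x y" "lex_less y z"
  then obtain n1 n2 where n1: "n1 < length x" "\<forall>j<n1. x!j = y!j" "x!n1 < y!n1"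
    and n2: "\<forall>j<n2. y!j = z!j" "y!n2 < z!n2"
    by (auto simp: lex_less_def)
  show ?thesis
    unfolding lex_less_def
  proof (intro exI[of _ "min n1 n2"] conjI allI impI)
    show "x ! min n1 n2 < z ! min n1 n2"
      using n1 n2 by (cases n1 n2 rule: linorder_cases) (auto simp: min_def)
  qed (use n1 n2 in auto)
qed

lemma lex_less_linear:
  assumes "length x = length y" "x \<noteq> y"
  shows "lex_less x y \<or> lex_less y x"
proof -
  define n where "n = (LEAST i. i < length x \<and> x!i \<noteq> y!i)"
  have "\<exists>i. i < length x \<and> x!i \<noteq> y!i"
  proof (rule ccontr)
    assume "\<nexists>i. i < length x \<and> x!i \<noteq> y!i"
    then have "x = y" using assms(1) by (auto intro: nth_equalityI)
    with assms(2) show False ..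
  qed
  then have n: "n < length x \<and> x!n \<noteq> y!n"
    unfolding n_def by (rule LeastI_ex)
  have prefix: "x!j = y!j" if "j < n" for j
  proof (rule ccontr)
    assume "x!j \<noteq> y!j"
    moreover have "j < length x" using that n by simp
    ultimately have "n \<le> j" unfolding n_def by (simp add: Least_le)
    with that show False by simp
  qed
  show ?thesis
  proof (cases "x!n < y!n")
    case True
    then have "lex_less x y" unfolding lex_less_def using n prefix by blast
    then show ?thesis ..
  next
    case False
    then have "y!n < x!n" using n by simp
    then have "lex_less y x" unfolding lex_less_def using n prefix assms(1) by auto
    then show ?thesis ..
  qed
qed

lemma exists_lex_least:
  assumes "finite A" "A \<noteq> {}" "\<forall>x\<in>A. length x = m"
  shows "\<exists>b\<in>A. \<forall>c\<in>A. c = b \<or> lex_less b c"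
  using assms
proof (induction A rule: finite_ne_induct)
  case (insert x A)
  then obtain b where b: "b \<in> A" "\<forall>c\<in>A. c = b \<or> lex_less b c" by auto
  show ?case
  proof (cases "lex_less x b")
    case True
    have "c = x \<or> lex_less x c" if "c \<in> insert x A" for c
      using that b(2) True lex_less_trans[OF True, of c] by auto
    then show ?thesis by blast
  next
    case False
    then have "x = b \<or> lex_less b x" using lex_less_linear[of x b] insert.prems b by auto
    then show ?thesis using b by auto
  qed
qed simp

definition lex_argmax :: "nat list set \<Rightarrow> (nat list \<Rightarrow> 'b::linorder) \<Rightarrow> nat list \<Rightarrow> bool" where
  "lex_argmax A f a \<longleftrightarrow> a \<in> A \<and> (\<forall>b\<in>A. f b \<le> f a) \<and> (\<forall>b\<in>A. f b = f a \<longrightarrow> b = a \<or> lex_less a b)"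

lemma lex_argmax_unique:
  assumes "lex_argmax A f a" "lex_argmax A f b"
  shows "a = b"
proof -
  have "f a = f b" using assms by (auto simp: lex_argmax_def intro: order_antisym)
  then have "b = a \<or> lex_less a b" "a = b \<or> lex_less b a"
    using assms by (auto simp: lex_argmax_def)
  then show ?thesis using lex_less_trans lex_less_irrefl by blast
qed

lemma lex_argmax_exists:
  assumes "finite A" "A \<noteq> {}" "\<forall>x\<in>A. length x = m"
  shows "\<exists>a. lex_argmax A f a"
proof -
  define M where "M = {a\<in>A. \<forall>b\<in>A. f b \<le> f a}"
  have "Max (f ` A) \<in> f ` A" using assms(1,2) by simp
  then obtain a where "a \<in> A" "f a = Max (f ` A)" by auto
  then have "\<forall>b\<in>A. f b \<le> f a" using assms(1) by simp
  then have "finite M" "M \<noteq> {}" "\<forall>x\<in>M. length x = m"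
    using assms \<open>a \<in> A\<close> by (auto simp: M_def)
  then obtain b where "b \<in> M" "\<forall>c\<in>M. c = b \<or> lex_less b c"
    using exists_lex_least by blast
  moreover have "c \<in> M" if "c \<in> A" "f c = f b" for c
    using that \<open>b \<in> M\<close> by (simp add: M_def)
  ultimately have "lex_argmax A f b"
    unfolding lex_argmax_def by (auto simp: M_def)
  then show ?thesis ..
qed

lemma ucb_best_eq_The: "ucb_best Ks r h = (THE a. lex_argmax (arm_tuples Ks) (ucb_index r h) a)"
  by (simp add: ucb_best_def lex_argmax_def)

lemma ucb_best_eqI:
  assumes "lex_argmax (arm_tuples Ks) (ucb_index r h) a"
  shows "ucb_best Ks r h = a"
  unfolding ucb_best_eq_The by (rule the_equality, rule assms, rule lex_argmax_unique[OF _ assms])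

lemma ucb_best_lex_argmax:
  assumes "arm_tuples Ks \<noteq> {}"
  shows "lex_argmax (arm_tuples Ks) (ucb_index r h) (ucb_best Ks r h)"
proof -
  obtain a where "lex_argmax (arm_tuples Ks) (ucb_index r h) a"
    using lex_argmax_exists[OF arm_tuples_finite assms] length_arm_tuple by blast
  with ucb_best_eqI show ?thesis by simp
qed

section \<open>The joint play of mUCB\<close>

lemma length_mucb_hist [simp]: "length (mucb_hist Ks r t) = t"
  by (induction t) auto

lemma nth_mucb_hist: "s < t \<Longrightarrow> mucb_hist Ks r t ! s = mucb_action Ks r (Suc s)"
proof (induction t)
  case (Suc t)
  then show ?case
    by (cases "s < t") (auto simp: nth_append mucb_action_def less_Suc_eq)
qed simp

lemma mucb_action_eq_last: "mucb_action Ks r s = last (mucb_hist Ks r (Suc (s - 1)))"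
  by (simp add: mucb_action_def)

lemma ucb_index_cong:
  assumes "\<forall>s\<in>{1..length h}. r b s = r' b s"
  shows "ucb_index r h b = ucb_index r' h b"
proof -
  have "emp_mean r h b = emp_mean r' h b"
    unfolding emp_mean_def using assms by (intro arg_cong2[where f="(/)"] sum.cong) auto
  then show ?thesis by (simp add: ucb_index_def)
qed

lemma ucb_best_cong:
  assumes "\<forall>b\<in>arm_tuples Ks. \<forall>s\<in>{1..length h}. r b s = r' b s"
  shows "ucb_best Ks r h = ucb_best Ks r' h"
proof -
  have "ucb_index r h b = ucb_index r' h b" if "b \<in> arm_tuples Ks" for b
    using assms that ucb_index_cong by blast
  then have "lex_argmax (arm_tuples Ks) (ucb_index r h) a = lex_argmax (arm_tuples Ks) (ucb_index r' h) a"
    for a by (cases "a \<in> arm_tuples Ks") (auto simp: lex_argmax_def)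
  then show ?thesis by (simp add: ucb_best_eq_The)
qed

lemma next_tuple_cong:
  assumes "\<forall>b\<in>arm_tuples Ks. \<forall>s\<in>{1..length h}. r b s = r' b s"
  shows "next_tuple Ks r h = next_tuple Ks r' h"
  using ucb_best_cong[OF assms] by (simp add: next_tuple_def player_arm_def)

lemma mucb_hist_cong:
  assumes "\<forall>b\<in>arm_tuples Ks. \<forall>s\<in>{1..t}. r b s = r' b s"
  shows "mucb_hist Ks r t = mucb_hist Ks r' t"
  using assms
proof (induction t)
  case (Suc t)
  then have "mucb_hist Ks r t = mucb_hist Ks r' t" by auto
  moreover have "next_tuple Ks r (mucb_hist Ks r t) = next_tuple Ks r' (mucb_hist Ks r t)"
    by (rule next_tuple_cong) (use Suc.prems in auto)
  ultimately show ?case by simp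
qed simp

lemma mucb_action_cong:
  assumes "\<forall>b\<in>arm_tuples Ks. \<forall>s\<in>{1..t - 1}. r b s = r' b s"
  shows "mucb_action Ks r t = mucb_action Ks r' t"
proof -
  have "mucb_hist Ks r (t - 1) = mucb_hist Ks r' (t - 1)" by (rule mucb_hist_cong[OF assms])
  moreover have "next_tuple Ks r (mucb_hist Ks r (t - 1)) = next_tuple Ks r' (mucb_hist Ks r (t - 1))"
    by (rule next_tuple_cong) (use assms in auto)
  ultimately show ?thesis by (simp add: mucb_action_def)
qed

lemma measurable_ucb_index [measurable]:
  assumes [measurable]: "\<And>a s. (\<lambda>x. r x a s) \<in> borel_measurable M"
  shows "(\<lambda>x. ucb_index (r x) h b) \<in> borel_measurable M"
  unfolding ucb_index_def emp_mean_def by measurable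

locale mucb =
  fixes Ks :: "nat list"
  assumes arms_pos: "\<forall>i<length Ks. 1 \<le> Ks!i"
begin

lemma prod_list_ge_1: "1 \<le> prod_list Ks"
proof -
  have "0 \<notin> set Ks" using arms_pos by (auto simp: in_set_conv_nth)
  then have "prod_list Ks \<noteq> 0" by (simp add: prod_list_zero_iff)
  then show ?thesis by simp
qed

lemma arm_tuples_nonempty: "arm_tuples Ks \<noteq> {}"
proof
  assume "arm_tuples Ks = {}"
  then have "prod_list Ks = 0" by (simp flip: card_arm_tuples)
  with prod_list_ge_1 show False by simp
qed

lemma init_tuple_in_arm_tuples: "map (\<lambda>i. init_arm Ks i t) [0..<length Ks] \<in> arm_tuples Ks"
proof -
  have "init_arm Ks i t \<le> Ks!i" if "i < length Ks" for i
  proof -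
    have "0 < Ks!i" using arms_pos that by force
    then show ?thesis unfolding init_arm_def by (metis Suc_eq_plus1 Suc_leI mod_less_divisor)
  qed
  then show ?thesis by (auto simp: arm_tuples_def init_arm_def)
qed

lemma next_tuple_eq:
  "next_tuple Ks r h = (if length h + 1 \<le> prod_list Ks
      then map (\<lambda>i. init_arm Ks i (length h + 1)) [0..<length Ks] else ucb_best Ks r h)"
proof (cases "length h + 1 \<le> prod_list Ks")
  case False
  have "ucb_best Ks r h \<in> arm_tuples Ks"
    using ucb_best_lex_argmax[OF arm_tuples_nonempty] by (simp add: lex_argmax_def)
  then have "map (\<lambda>i. ucb_best Ks r h ! i) [0..<length Ks] = ucb_best Ks r h"
    by (metis length_arm_tuple map_nth)
  moreover have "player_arm Ks r h = (\<lambda>i. ucb_best Ks r h ! i)"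
    using False by (simp add: player_arm_def fun_eq_iff)
  ultimately show ?thesis using False by (simp add: next_tuple_def)
qed (simp add: next_tuple_def player_arm_def)

lemma mucb_action_in_arm_tuples: "mucb_action Ks r t \<in> arm_tuples Ks"
  using init_tuple_in_arm_tuples ucb_best_lex_argmax[OF arm_tuples_nonempty]
  by (simp add: mucb_action_def next_tuple_eq lex_argmax_def)

lemma mucb_action_eq_ucb_best:
  "prod_list Ks \<le> t \<Longrightarrow> mucb_action Ks r (Suc t) = ucb_best Ks r (mucb_hist Ks r t)"
  by (simp add: mucb_action_def next_tuple_eq)

lemma measurable_ucb_best:
  assumes [measurable]: "\<And>a s. (\<lambda>x. r x a s) \<in> borel_measurable M"
  shows "(\<lambda>x. ucb_best Ks (r x) h) \<in> measurable M (count_space UNIV)"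
proof (rule measurable_count_space_eq2_countable[THEN iffD2], safe)
  fix b
  have "Measurable.pred M (\<lambda>x. lex_argmax (arm_tuples Ks) (ucb_index (r x) h) b)"
    unfolding lex_argmax_def by measurable
  moreover have "ucb_best Ks (r x) h = b \<longleftrightarrow> lex_argmax (arm_tuples Ks) (ucb_index (r x) h) b" for x
    using ucb_best_lex_argmax[OF arm_tuples_nonempty] ucb_best_eqI by metis
  then have "(\<lambda>x. ucb_best Ks (r x) h) -` {b} \<inter> space M
      = {x\<in>space M. lex_argmax (arm_tuples Ks) (ucb_index (r x) h) b}"
    by auto
  ultimately show "(\<lambda>x. ucb_best Ks (r x) h) -` {b} \<inter> space M \<in> sets M" by simp
qed simp

lemma measurable_mucb_hist:
  assumes [measurable]: "\<And>a s. (\<lambda>x. r x a s) \<in> borel_measurable M"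
  shows "(\<lambda>x. mucb_hist Ks (r x) t) \<in> measurable M (count_space UNIV)"
proof (induction t)
  case (Suc t)
  have "(\<lambda>x. h @ [next_tuple Ks (r x) h]) \<in> measurable M (count_space UNIV)" for h
    unfolding next_tuple_eq
    by (rule measurable_compose[OF measurable_ucb_best[OF assms]]) simp
  then show ?case
    using measurable_compose_countable[OF _ Suc, of "\<lambda>h x. h @ [next_tuple Ks (r x) h]"] by simp
qed simp

lemma pred_mucb_hist:
  assumes "\<And>a s. (\<lambda>x. r x a s) \<in> borel_measurable M"
  shows "Measurable.pred M (\<lambda>x. Q (mucb_hist Ks (r x) t))"
  using measurable_compose[OF measurable_mucb_hist[OF assms], of "\<lambda>h. Q h" "count_space UNIV"]
  by (simp add: pred_def)

end

section \<open>Play counts and the first rewards of a tuple\<close>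

definition plays :: "(nat \<Rightarrow> 'a) \<Rightarrow> 'a \<Rightarrow> nat \<Rightarrow> nat" where
  "plays A a t = card {s\<in>{1..t}. A s = a}"

lemma plays_Suc: "plays A a (Suc t) = plays A a t + (if A (Suc t) = a then 1 else 0)"
proof -
  have "{s\<in>{1..Suc t}. A s = a} =
      (if A (Suc t) = a then insert (Suc t) {s\<in>{1..t}. A s = a} else {s\<in>{1..t}. A s = a})"
    by (auto simp: le_Suc_eq)
  then show ?thesis by (simp add: plays_def)
qed

lemma plays_mono: "s \<le> t \<Longrightarrow> plays A a s \<le> plays A a t"
  unfolding plays_def by (rule card_mono) auto

lemma plays_le: "plays A a t \<le> t"
proof -
  have "plays A a t \<le> card {1..t}" unfolding plays_def by (rule card_mono) auto
  then show ?thesis by simp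
qed

lemma plays_less: "A (Suc s) = a \<Longrightarrow> s < t \<Longrightarrow> plays A a s < plays A a t"
  using plays_mono[of "Suc s" t A a] by (simp add: plays_Suc)

lemma inj_on_plays: "inj_on (plays A a) {s. A (Suc s) = a}"
proof (rule inj_onI, rule ccontr)
  fix s t assume "s \<in> {s. A (Suc s) = a}" "t \<in> {s. A (Suc s) = a}" "plays A a s = plays A a t" "s \<noteq> t"
  then show False using plays_less[of A s a t] plays_less[of A t a s] by (auto simp: neq_iff)
qed

definition among_first_plays :: "(nat \<Rightarrow> 'a) \<Rightarrow> 'a \<Rightarrow> nat \<Rightarrow> nat \<Rightarrow> bool" where
  "among_first_plays A a n s \<longleftrightarrow> A s = a \<and> plays A a (s - 1) < n"

lemma among_first_plays_eq_plays_upto: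
  assumes "plays A a t = n" "t \<le> T"
  shows "{s\<in>{1..T}. among_first_plays A a n s} = {s\<in>{1..t}. A s = a}"
proof (intro set_eqI iffI)
  fix s assume s: "s \<in> {s\<in>{1..T}. among_first_plays A a n s}"
  have "s - 1 < t"
  proof (rule ccontr)
    assume "\<not> s - 1 < t"
    then have "plays A a t \<le> plays A a (s - 1)" by (intro plays_mono) simp
    then show False using s assms by (simp add: among_first_plays_def)
  qed
  then show "s \<in> {s\<in>{1..t}. A s = a}" using s by (auto simp: among_first_plays_def)
next
  fix s assume s: "s \<in> {s\<in>{1..t}. A s = a}"
  then have "plays A a (s - 1) < plays A a t" by (intro plays_less) auto
  then show "s \<in> {s\<in>{1..T}. among_first_plays A a n s}"
    using s assms by (auto simp: among_first_plays_def)
qed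

lemma card_among_first_plays_le: "card {s\<in>{1..T}. among_first_plays A a n s} \<le> n"
proof -
  let ?B = "{s\<in>{1..T}. among_first_plays A a n s}"
  have "inj_on (\<lambda>s. s - 1) ?B" "(\<lambda>s. s - 1) ` ?B \<subseteq> {s. A (Suc s) = a}"
    by (auto simp: inj_on_def among_first_plays_def)
  then have "inj_on (plays A a \<circ> (\<lambda>s. s - 1)) ?B"
    by (intro comp_inj_on inj_on_subset[OF inj_on_plays])
  then have "inj_on (\<lambda>s. plays A a (s - 1)) ?B" by (simp add: comp_def)
  moreover have "(\<lambda>s. plays A a (s - 1)) ` ?B \<subseteq> {..<n}"
    by (auto simp: among_first_plays_def)
  ultimately show ?thesis using card_inj_on_le[of _ ?B "{..<n}"] by fastforce
qed

lemma play_count_mucb_hist: "play_count (mucb_hist Ks r t) a = plays (mucb_action Ks r) a t"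
proof -
  have "{s\<in>{1..t}. mucb_hist Ks r t ! (s - 1) = a} = {s\<in>{1..t}. mucb_action Ks r s = a}"
    by (auto simp: nth_mucb_hist)
  then show ?thesis by (simp add: play_count_def plays_def)
qed

lemma among_first_plays_cong:
  assumes "\<forall>b\<in>arm_tuples Ks. \<forall>s'\<in>{1..s - 1}. r b s' = r' b s'"
  shows "among_first_plays (mucb_action Ks r) a n s = among_first_plays (mucb_action Ks r') a n s"
proof -
  have "mucb_hist Ks r (s - 1) = mucb_hist Ks r' (s - 1)" by (rule mucb_hist_cong[OF assms])
  moreover have "mucb_action Ks r s = mucb_action Ks r' s" by (rule mucb_action_cong[OF assms])
  ultimately show ?thesis by (simp add: among_first_plays_def flip: play_count_mucb_hist)
qed

text \<open>The centred rewards of the first \<open>n\<close> plays of \<open>a\<close> within the horizon \<open>T\<close>. For fixed \<open>n\<close>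
  they concentrate like a sum of \<open>n\<close> independent rewards although the rounds of these plays are
  random, and once \<open>a\<close> has been played \<open>n\<close> times they determine its empirical mean.\<close>
definition first_rewards_dev ::
    "nat list \<Rightarrow> (nat list \<Rightarrow> nat \<Rightarrow> real) \<Rightarrow> (nat list \<Rightarrow> real) \<Rightarrow> nat \<Rightarrow> nat list \<Rightarrow> nat \<Rightarrow> real" where
  "first_rewards_dev Ks r \<mu> T a n =
     (\<Sum>s | s \<in> {1..T} \<and> among_first_plays (mucb_action Ks r) a n s. r a s - \<mu> a)"

text \<open>\<open>n\<close> times the confidence width \<open>sqrt (2 * ln (1 / \<delta>) / n)\<close> of the index, for \<open>\<delta> = 1 / t\<^sup>2\<close>.\<close>
definition conf_radius :: "nat \<Rightarrow> nat \<Rightarrow> real" where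
  "conf_radius t n = sqrt (4 * real n * ln (real t))"

lemma conf_radius_mono: "1 \<le> t \<Longrightarrow> t \<le> T \<Longrightarrow> conf_radius t n \<le> conf_radius T n"
  unfolding conf_radius_def by (intro real_sqrt_le_mono mult_left_mono) auto

lemma ucb_index_mucb_hist:
  assumes "1 \<le> t" "t \<le> T" "plays (mucb_action Ks r) a t = n" "1 \<le> n"
  shows "ucb_index r (mucb_hist Ks r t) a =
           ereal (\<mu> a + (first_rewards_dev Ks r \<mu> T a n + conf_radius t n) / real n)"
proof -
  let ?P = "{s\<in>{1..t}. mucb_action Ks r s = a}"
  have "first_rewards_dev Ks r \<mu> T a n = (\<Sum>s\<in>?P. r a s - \<mu> a)"
    unfolding first_rewards_dev_def using among_first_plays_eq_plays_upto[OF assms(3,2)] by simp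
  also have "\<dots> = (\<Sum>s\<in>?P. r a s) - real n * \<mu> a"
    using assms(3) by (simp add: sum_subtractf plays_def)
  finally have mean: "emp_mean r (mucb_hist Ks r t) a = \<mu> a + first_rewards_dev Ks r \<mu> T a n / real n"
    using assms(3,4) by (simp add: emp_mean_def play_count_mucb_hist nth_mucb_hist field_simps
        cong: conj_cong)
  have "sqrt (2 * ln (1 / (1 / real t ^ 2)) / real n) = sqrt (real n * (4 * ln (real t))) / real n"
    using assms(1,4) by (simp add: ln_realpow real_sqrt_divide real_sqrt_mult field_simps)
  then have "sqrt (2 * ln (1 / (1 / real t ^ 2)) / real n) = conf_radius t n / real n"
    by (simp add: conf_radius_def mult.assoc mult.left_commute)
  then show ?thesis
    using assms(3,4) mean by (simp add: ucb_index_def play_count_mucb_hist add_divide_distrib)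
qed

context mucb
begin

lemma pred_among_first_plays [measurable]:
  assumes "\<And>a s. (\<lambda>x. r x a s) \<in> borel_measurable M"
  shows "Measurable.pred M (\<lambda>x. among_first_plays (mucb_action Ks (r x)) a n s)"
proof -
  have [measurable]: "Measurable.pred M (\<lambda>x. last (mucb_hist Ks (r x) (Suc (s - 1))) = a)"
    "Measurable.pred M (\<lambda>x. play_count (mucb_hist Ks (r x) (s - 1)) a < n)"
    by (rule pred_mucb_hist[OF assms])+
  show ?thesis
    unfolding among_first_plays_def play_count_mucb_hist[symmetric] mucb_action_eq_last by measurable
qed

lemma measurable_first_rewards_dev [measurable]:
  assumes [measurable]: "\<And>a s. (\<lambda>x. r x a s) \<in> borel_measurable M"
  shows "(\<lambda>x. first_rewards_dev Ks (r x) \<mu> T a n) \<in> borel_measurable M"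
  unfolding first_rewards_dev_def sum.inter_filter[OF finite_atLeastAtMost]
  by measurable

end

section \<open>A pathwise regret decomposition\<close>

lemma sum_indicator_eq_card:
  "finite A \<Longrightarrow> (\<Sum>x\<in>A. if P x then 1 else 0) = (of_nat (card {x\<in>A. P x}) :: 'b::semiring_1)"
  by (simp add: sum.If_cases Int_def)

lemma gap_le_epsilon_failure_bad:
  fixes \<Delta> :: "'a \<Rightarrow> real"
  assumes "x \<in> S" "finite S" "\<forall>b\<in>S. 0 \<le> \<Delta> b \<and> \<Delta> b \<le> 1" "0 \<le> \<epsilon>" "finite N"
  shows "\<Delta> x \<le> \<epsilon> + (\<Sum>n\<in>N. if D n then 1 else 0) +
           (\<Sum>a | a \<in> S \<and> \<epsilon> < \<Delta> a. \<Delta> a * (if x = a \<and> (\<forall>n\<in>N. \<not> D n) then 1 else 0))"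
proof -
  let ?Bad = "{a. a \<in> S \<and> \<epsilon> < \<Delta> a}"
  have nonneg_D: "0 \<le> (\<Sum>n\<in>N. if D n then 1 else 0::real)" by (rule sum_nonneg) simp
  have nonneg_Bad: "0 \<le> (\<Sum>a\<in>?Bad. \<Delta> a * (if x = a \<and> (\<forall>n\<in>N. \<not> D n) then 1 else 0))"
    using assms(3) by (intro sum_nonneg) auto
  consider "\<Delta> x \<le> \<epsilon>" | "\<exists>n\<in>N. D n" | "x \<in> ?Bad" "\<forall>n\<in>N. \<not> D n"
    using assms(1) by force
  then show ?thesis
  proof cases
    case 2
    then obtain n where "n \<in> N" "D n" by blast
    then have "1 \<le> (\<Sum>n\<in>N. if D n then 1 else 0::real)"
      using member_le_sum[of n N "\<lambda>n. if D n then 1 else 0::real"] assms(5) by auto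
    then show ?thesis using assms(1,3,4) nonneg_Bad by fastforce
  next
    case 3
    then have "(\<Sum>a\<in>?Bad. \<Delta> a * (if x = a \<and> (\<forall>n\<in>N. \<not> D n) then 1 else 0))
        = (\<Sum>a\<in>?Bad. if a = x then \<Delta> a else 0)"
      by (intro sum.cong) auto
    also have "\<dots> = \<Delta> x" using 3 assms(2) by (simp add: sum.delta)
    finally show ?thesis using assms(4) nonneg_D by linarith
  qed (use nonneg_D nonneg_Bad in linarith)
qed

context mucb
begin

lemma first_rewards_dev_ge_if_played:
  assumes "prod_list Ks \<le> t" "t < T" "astar \<in> arm_tuples Ks"
    and astar_ok: "\<forall>m\<in>{1..t}. - conf_radius t m \<le> first_rewards_dev Ks r \<mu> T astar m"
    and "mucb_action Ks r (Suc t) = a" "plays (mucb_action Ks r) a t = n" "1 \<le> n"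
  shows "real n * (\<mu> astar - \<mu> a) - conf_radius T n \<le> first_rewards_dev Ks r \<mu> T a n"
proof -
  let ?I = "ucb_index r (mucb_hist Ks r t)"
  have t: "1 \<le> t" "t \<le> T" using prod_list_ge_1 assms(1,2) by auto
  have "ereal (\<mu> astar) \<le> ?I astar"
  proof (cases "plays (mucb_action Ks r) astar t = 0")
    case True
    then show ?thesis by (simp add: ucb_index_def play_count_mucb_hist)
  next
    case False
    define m where "m = plays (mucb_action Ks r) astar t"
    have m: "m \<in> {1..t}" using False plays_le[of _ astar t] by (auto simp: m_def)
    then have "- conf_radius t m \<le> first_rewards_dev Ks r \<mu> T astar m" using astar_ok by blast
    then have "0 \<le> (first_rewards_dev Ks r \<mu> T astar m + conf_radius t m) / real m"
      by (intro divide_nonneg_nonneg) simp_all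
    then show ?thesis using ucb_index_mucb_hist[where \<mu>=\<mu>, OF t m_def[symmetric]] m by simp
  qed
  also have "?I astar \<le> ?I a"
    using ucb_best_lex_argmax[OF arm_tuples_nonempty, of r "mucb_hist Ks r t"] assms(3,5)
      mucb_action_eq_ucb_best[OF assms(1)] by (auto simp: lex_argmax_def)
  also have "?I a = ereal (\<mu> a + (first_rewards_dev Ks r \<mu> T a n + conf_radius t n) / real n)"
    by (rule ucb_index_mucb_hist[OF t assms(6,7)])
  finally have "real n * (\<mu> astar - \<mu> a) - conf_radius t n \<le> first_rewards_dev Ks r \<mu> T a n"
    using assms(7) by (simp add: field_simps)
  then show ?thesis using conf_radius_mono[OF t, of n] by linarith
qed

lemma card_good_rounds_playing_le:
  assumes "astar \<in> arm_tuples Ks"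
  shows "card {t\<in>{prod_list Ks..<T}. mucb_action Ks r (Suc t) = a \<and>
               (\<forall>n\<in>{1..t}. - conf_radius t n \<le> first_rewards_dev Ks r \<mu> T astar n)}
         \<le> 1 + card {n\<in>{1..T}. real n * (\<mu> astar - \<mu> a) - conf_radius T n \<le> first_rewards_dev Ks r \<mu> T a n}"
    (is "card ?G \<le> 1 + card ?N")
proof -
  let ?A = "mucb_action Ks r"
  have "inj_on (plays ?A a) ?G" by (rule inj_on_subset[OF inj_on_plays]) auto
  moreover have "plays ?A a ` ?G \<subseteq> insert 0 ?N"
  proof
    fix n assume "n \<in> plays ?A a ` ?G"
    then obtain t where t: "t \<in> ?G" "n = plays ?A a t" by auto
    have "n \<le> T" using t plays_le[of ?A a t] by auto
    then show "n \<in> insert 0 ?N"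
      using first_rewards_dev_ge_if_played[OF _ _ assms, of t T r \<mu> a n] t by (cases "n = 0") auto
  qed
  ultimately have "card ?G \<le> card (insert 0 ?N)" by (intro card_inj_on_le) auto
  also have "\<dots> \<le> 1 + card ?N" by (simp add: card_insert_if)
  finally show ?thesis .
qed

text \<open>After the initialisation, the gap of round \<open>t + 1\<close> is charged to \<open>\<epsilon>\<close>, to a failure of
  optimism for \<open>astar\<close>, or to the current play count of a tuple whose gap exceeds \<open>\<epsilon>\<close>.\<close>
lemma pseudo_regret_decomposition:
  assumes astar: "astar \<in> arm_tuples Ks"
    and gaps: "\<forall>b\<in>arm_tuples Ks. 0 \<le> \<mu> astar - \<mu> b \<and> \<mu> astar - \<mu> b \<le> 1" and "0 \<le> \<epsilon>"
  shows "(\<Sum>t=1..T. \<mu> astar - \<mu> (mucb_action Ks r t)) \<le> real (prod_list Ks) + \<epsilon> * real T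
     + (\<Sum>t\<in>{prod_list Ks..<T}. \<Sum>n\<in>{1..t}.
          if first_rewards_dev Ks r \<mu> T astar n < - conf_radius t n then 1 else 0)
     + (\<Sum>a | a \<in> arm_tuples Ks \<and> \<epsilon> < \<mu> astar - \<mu> a. (\<mu> astar - \<mu> a) * (1 + (\<Sum>n\<in>{1..T}.
          if real n * (\<mu> astar - \<mu> a) - conf_radius T n \<le> first_rewards_dev Ks r \<mu> T a n then 1 else 0)))"
proof -
  define K where "K = prod_list Ks"
  define A where "A = mucb_action Ks r"
  define \<Delta> where "\<Delta> b = \<mu> astar - \<mu> b" for b
  define Bad where "Bad = {a. a \<in> arm_tuples Ks \<and> \<epsilon> < \<Delta> a}"
  define D where "D t n \<longleftrightarrow> first_rewards_dev Ks r \<mu> T astar n < - conf_radius t n" for t n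
  define B where "B a n \<longleftrightarrow> real n * \<Delta> a - conf_radius T n \<le> first_rewards_dev Ks r \<mu> T a n" for a n
  have A: "A t \<in> arm_tuples Ks" for t unfolding A_def by (rule mucb_action_in_arm_tuples)
  have "(\<Sum>t=1..T. \<Delta> (A t)) = (\<Sum>t<T. \<Delta> (A (Suc t)))"
    by (simp add: sum.atLeast1_atMost_eq)
  also have "\<dots> = (\<Sum>t\<in>{..<T} \<inter> {..<K}. \<Delta> (A (Suc t))) + (\<Sum>t\<in>{K..<T}. \<Delta> (A (Suc t)))"
    by (subst sum.Int_Diff[of _ _ "{..<K}"]) (auto intro!: sum.cong)
  also have "(\<Sum>t\<in>{..<T} \<inter> {..<K}. \<Delta> (A (Suc t))) \<le> real K"
    using sum_bounded_above[of "{..<T} \<inter> {..<K}" "\<lambda>t. \<Delta> (A (Suc t))" 1] gaps A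
      card_mono[of "{..<K}" "{..<T} \<inter> {..<K}"] by (force simp: \<Delta>_def)
  also have "(\<Sum>t\<in>{K..<T}. \<Delta> (A (Suc t))) \<le> (\<Sum>t\<in>{K..<T}. \<epsilon> + (\<Sum>n\<in>{1..t}. if D t n then 1 else 0)
      + (\<Sum>a\<in>Bad. \<Delta> a * (if A (Suc t) = a \<and> (\<forall>n\<in>{1..t}. \<not> D t n) then 1 else 0)))"
    unfolding Bad_def using gaps A assms(3)
    by (intro sum_mono gap_le_epsilon_failure_bad[OF _ arm_tuples_finite]) (auto simp: \<Delta>_def)
  also have "\<dots> = real (T - K) * \<epsilon> + (\<Sum>t\<in>{K..<T}. \<Sum>n\<in>{1..t}. if D t n then 1 else 0)
      + (\<Sum>a\<in>Bad. \<Delta> a * (\<Sum>t\<in>{K..<T}. if A (Suc t) = a \<and> (\<forall>n\<in>{1..t}. \<not> D t n) then 1 else 0))"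
    by (simp add: sum.distrib sum_distrib_left sum.swap[of _ Bad])
  also have "\<dots> = real (T - K) * \<epsilon> + (\<Sum>t\<in>{K..<T}. \<Sum>n\<in>{1..t}. if D t n then 1 else 0)
      + (\<Sum>a\<in>Bad. \<Delta> a * real (card {t\<in>{K..<T}. A (Suc t) = a \<and> (\<forall>n\<in>{1..t}. \<not> D t n)}))"
    by (simp only: sum_indicator_eq_card finite_atLeastLessThan)
  also have "\<dots> \<le> real T * \<epsilon> + (\<Sum>t\<in>{K..<T}. \<Sum>n\<in>{1..t}. if D t n then 1 else 0)
      + (\<Sum>a\<in>Bad. \<Delta> a * (1 + (\<Sum>n\<in>{1..T}. if B a n then 1 else 0)))"
  proof (intro add_mono sum_mono mult_left_mono order.refl)
    show "real (T - K) * \<epsilon> \<le> real T * \<epsilon>" using assms(3) by (intro mult_right_mono) auto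
    fix a assume "a \<in> Bad"
    then show "0 \<le> \<Delta> a" using gaps by (auto simp: Bad_def \<Delta>_def)
    show "real (card {t\<in>{K..<T}. A (Suc t) = a \<and> (\<forall>n\<in>{1..t}. \<not> D t n)})
        \<le> 1 + (\<Sum>n\<in>{1..T}. if B a n then 1 else 0)"
      using card_good_rounds_playing_le[OF astar, where T=T and r=r and \<mu>=\<mu> and a=a]
      by (simp add: K_def A_def D_def B_def \<Delta>_def not_less sum_indicator_eq_card)
  qed
  finally show ?thesis
    by (simp add: K_def A_def \<Delta>_def Bad_def D_def B_def mult.commute)
qed

end

section \<open>An exponential supermartingale\<close>

definition exp_supermartingale ::
    "nat list \<Rightarrow> (nat list \<Rightarrow> nat \<Rightarrow> real) \<Rightarrow> (nat list \<Rightarrow> real) \<Rightarrow> nat list \<Rightarrow> nat \<Rightarrow> real \<Rightarrow> real \<Rightarrow> nat \<Rightarrow> real" where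
  "exp_supermartingale Ks r \<mu> a n l sg t = (\<Prod>s\<in>{1..t}.
     if among_first_plays (mucb_action Ks r) a n s then exp (l * (sg * (r a s - \<mu> a)) - l\<^sup>2 / 8) else 1)"

lemma exp_supermartingale_nonneg: "0 \<le> exp_supermartingale Ks r \<mu> a n l sg t"
  unfolding exp_supermartingale_def by (rule prod_nonneg) auto

lemma exp_supermartingale_Suc:
  "exp_supermartingale Ks r \<mu> a n l sg (Suc t) = exp_supermartingale Ks r \<mu> a n l sg t *
     (if among_first_plays (mucb_action Ks r) a n (Suc t) then exp (l * (sg * (r a (Suc t) - \<mu> a)) - l\<^sup>2 / 8) else 1)"
  by (simp add: exp_supermartingale_def atLeastAtMostSuc_conv)

lemma exp_supermartingale_cong:
  assumes "a \<in> arm_tuples Ks" "\<forall>b\<in>arm_tuples Ks. \<forall>s\<in>{1..t}. r b s = r' b s"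
  shows "exp_supermartingale Ks r \<mu> a n l sg t = exp_supermartingale Ks r' \<mu> a n l sg t"
proof -
  have "among_first_plays (mucb_action Ks r) a n s = among_first_plays (mucb_action Ks r') a n s"
    if "s \<in> {1..t}" for s
    using assms(2) that by (intro among_first_plays_cong) auto
  then show ?thesis using assms unfolding exp_supermartingale_def by (intro prod.cong) auto
qed

lemma exp_supermartingale_ge:
  assumes "0 < l"
  shows "exp (l * (sg * first_rewards_dev Ks r \<mu> T a n) - l\<^sup>2 / 8 * real n) \<le> exp_supermartingale Ks r \<mu> a n l sg T"
proof -
  let ?Sel = "{s\<in>{1..T}. among_first_plays (mucb_action Ks r) a n s}"
  have "exp_supermartingale Ks r \<mu> a n l sg T = (\<Prod>s\<in>?Sel. exp (l * (sg * (r a s - \<mu> a)) - l\<^sup>2 / 8))"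
    unfolding exp_supermartingale_def by (rule prod.inter_filter[symmetric]) simp
  also have "\<dots> = exp (\<Sum>s\<in>?Sel. l * (sg * (r a s - \<mu> a)) - l\<^sup>2 / 8)"
    by (simp add: exp_sum)
  also have "(\<Sum>s\<in>?Sel. l * (sg * (r a s - \<mu> a)) - l\<^sup>2 / 8)
      = (\<Sum>s\<in>?Sel. l * (sg * (r a s - \<mu> a))) - (\<Sum>s\<in>?Sel. l\<^sup>2 / 8)"
    by (rule sum_subtractf)
  also have "(\<Sum>s\<in>?Sel. l * (sg * (r a s - \<mu> a))) = l * (sg * (\<Sum>s\<in>?Sel. r a s - \<mu> a))"
    by (simp add: sum_distrib_left)
  also have "(\<Sum>s\<in>?Sel. r a s - \<mu> a) = first_rewards_dev Ks r \<mu> T a n"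
    by (simp add: first_rewards_dev_def)
  finally have "exp_supermartingale Ks r \<mu> a n l sg T
      = exp (l * (sg * first_rewards_dev Ks r \<mu> T a n) - l\<^sup>2 / 8 * real (card ?Sel))"
    by simp
  moreover have "l\<^sup>2 / 8 * real (card ?Sel) \<le> l\<^sup>2 / 8 * real n"
    using card_among_first_plays_le[of T "mucb_action Ks r" a n] by (intro mult_left_mono) auto
  ultimately show ?thesis by simp
qed

context mucb
begin

lemma measurable_exp_supermartingale [measurable]:
  assumes [measurable]: "\<And>a s. (\<lambda>x. r x a s) \<in> borel_measurable M"
  shows "(\<lambda>x. exp_supermartingale Ks (r x) \<mu> a n l sg t) \<in> borel_measurable M"
  unfolding exp_supermartingale_def by measurable

end

lemma sum_inverse_squares_telescope:
  "2 \<le> N \<Longrightarrow> (\<Sum>t\<in>{2..<N}. 1 / (real t)\<^sup>2) \<le> 1 - 1 / real (N - 1)"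
proof (induction N rule: nat_induct_at_least)
  case (Suc N)
  have "1 / (real N)\<^sup>2 \<le> 1 / (real N - 1) - 1 / real N"
    using Suc.hyps by (simp add: field_simps power2_eq_square)
  then show ?case using Suc by simp
qed simp

lemma sum_inverse_squares_le_1: "2 \<le> K \<Longrightarrow> (\<Sum>t\<in>{K..<T}. 1 / (real t)\<^sup>2) \<le> 1"
proof (cases "2 \<le> T")
  case True
  assume "2 \<le> K"
  then have "(\<Sum>t\<in>{K..<T}. 1 / (real t)\<^sup>2) \<le> (\<Sum>t\<in>{2..<T}. 1 / (real t)\<^sup>2)"
    by (intro sum_mono2) auto
  also have "\<dots> \<le> 1 - 1 / real (T - 1)" by (rule sum_inverse_squares_telescope[OF True])
  also have "\<dots> \<le> 1" by simp
  finally show ?thesis .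
qed simp

lemma exp_minus_mult_ln: "0 < t \<Longrightarrow> exp (- (real k * ln t)) = 1 / t ^ k"
  by (simp add: exp_minus exp_of_nat_mult field_simps)

lemma card_below_le:
  assumes "0 < u"
  shows "real (card {n\<in>{1..T}. real n < u}) \<le> u"
proof -
  have "{n\<in>{1..T}. real n < u} \<subseteq> {1..<nat \<lceil>u\<rceil>}" by (auto simp: zless_nat_eq_int_zless less_ceiling_iff)
  then have "card {n\<in>{1..T}. real n < u} \<le> nat \<lceil>u\<rceil> - 1"
    using card_mono[of "{1..<nat \<lceil>u\<rceil>}"] by fastforce
  moreover have "real (nat \<lceil>u\<rceil> - 1) \<le> u" using assms by linarith
  ultimately show ?thesis by (meson of_nat_le_iff order_trans)
qed

text \<open>The constant \<open>6 + 4 * sqrt 2 = (2 + sqrt 2)\<^sup>2\<close> is the threshold from which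
  \<open>sqrt (4 * n * L) \<le> (2 - sqrt 2) * n * D\<close>, leaving the margin \<open>(sqrt 2 - 1) * n * D\<close>.\<close>
lemma deviation_margin:
  fixes n :: nat and L D :: real
  assumes n: "1 \<le> n" and L: "0 \<le> L" and D: "0 < D"
    and large: "(6 + 4 * sqrt 2) * L / D\<^sup>2 \<le> real n"
  defines "x \<equiv> real n * D - sqrt (4 * real n * L)"
  shows "0 < x" "4 * L \<le> 2 * x\<^sup>2 / real n"
proof -
  have sq: "sqrt 2 * sqrt 2 = 2" by simp
  have s: "(6 - 4 * sqrt 2) * (6 + 4 * sqrt 2) = 4" "(3 - 2 * sqrt 2) * (6 + 4 * sqrt 2) = 2"
    "(2 - sqrt 2)\<^sup>2 = 6 - 4 * sqrt 2" by (simp_all add: algebra_simps power2_eq_square sq)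
  have "sqrt 2 < sqrt ((3/2)\<^sup>2)" by (rule real_sqrt_less_mono) (simp add: power2_eq_square)
  then have s32: "sqrt 2 < 3/2" by simp
  have nD: "(6 + 4 * sqrt 2) * L \<le> real n * D\<^sup>2" using large D by (simp add: field_simps)
  have "4 * L = (6 - 4 * sqrt 2) * ((6 + 4 * sqrt 2) * L)" using s(1) by (simp add: algebra_simps)
  also have "\<dots> \<le> (6 - 4 * sqrt 2) * (real n * D\<^sup>2)"
    by (rule mult_left_mono[OF nD]) (use s32 in simp)
  finally have "real n * (4 * L) \<le> real n * ((6 - 4 * sqrt 2) * (real n * D\<^sup>2))"
    by (rule mult_left_mono) simp
  also have "\<dots> = ((2 - sqrt 2) * real n * D)\<^sup>2"
    using s(3) by (simp add: power_mult_distrib algebra_simps power2_eq_square)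
  finally have "sqrt (4 * real n * L) \<le> (2 - sqrt 2) * real n * D"
    using s32 D L by (intro real_le_lsqrt) (auto simp: mult.assoc)
  then have x: "(sqrt 2 - 1) * (real n * D) \<le> x" unfolding x_def by (simp add: algebra_simps)
  have pos: "0 < (sqrt 2 - 1) * (real n * D)" using n D by simp
  show "0 < x" using x pos by linarith
  have "((sqrt 2 - 1) * (real n * D))\<^sup>2 \<le> x\<^sup>2" using x pos by (intro power_mono) auto
  moreover have "((sqrt 2 - 1) * (real n * D))\<^sup>2 = (3 - 2 * sqrt 2) * real n * (real n * D\<^sup>2)"
    by (simp add: power2_eq_square algebra_simps sq)
  ultimately have "2 * (3 - 2 * sqrt 2) * (real n * D\<^sup>2) \<le> 2 * x\<^sup>2 / real n"
    using n by (simp add: field_simps)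
  moreover have "2 * (3 - 2 * sqrt 2) * ((6 + 4 * sqrt 2) * L) \<le> 2 * (3 - 2 * sqrt 2) * (real n * D\<^sup>2)"
    by (rule mult_left_mono[OF nD]) (use s32 in simp)
  moreover have "2 * (3 - 2 * sqrt 2) * ((6 + 4 * sqrt 2) * L) = 4 * L"
    using s(2) by (simp add: algebra_simps)
  ultimately show "4 * L \<le> 2 * x\<^sup>2 / real n" by linarith
qed

lemma mult_sqrt_div_eq:
  assumes "0 < T" "0 \<le> L"
  shows "T * sqrt (L / T) = sqrt (T * L)"
proof -
  have "T = sqrt (T * T)" using assms(1) by simp
  then have "T * sqrt (L / T) = sqrt (T * T * (L / T))" by (metis real_sqrt_mult)
  also have "T * T * (L / T) = T * L" using assms(1) by simp
  finally show ?thesis .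
qed

lemma div_sqrt_div_eq: "0 < T \<Longrightarrow> 0 < L \<Longrightarrow> L / sqrt (L / T) = sqrt (T * L)"
  by (simp add: real_sqrt_divide real_sqrt_mult field_simps)

lemma sum_indicator_mult_eq:
  assumes "x \<in> A" "finite A"
  shows "(\<Sum>b\<in>A. (if x = b then 1 else 0) * f b) = (f x :: 'b::semiring_1)"
proof -
  have "(\<Sum>b\<in>A. (if x = b then 1 else 0) * f b) = (\<Sum>b\<in>A. if x = b then f b else 0)"
    by (intro sum.cong) auto
  then show ?thesis using assms by (simp add: sum.delta')
qed

lemma (in prob_space) indep_var_nn_integral:
  fixes X1 X2 :: "'a \<Rightarrow> real"
  assumes "indep_var borel X1 borel X2" "\<And>\<omega>. 0 \<le> X1 \<omega>" "\<And>\<omega>. 0 \<le> X2 \<omega>"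
  shows "(\<integral>\<^sup>+\<omega>. ennreal (X1 \<omega> * X2 \<omega>) \<partial>M) = (\<integral>\<^sup>+\<omega>. ennreal (X1 \<omega>) \<partial>M) * (\<integral>\<^sup>+\<omega>. ennreal (X2 \<omega>) \<partial>M)"
proof -
  have "indep_var borel (\<lambda>\<omega>. ennreal (X1 \<omega>)) borel (\<lambda>\<omega>. ennreal (X2 \<omega>))"
    using indep_var_compose[OF assms(1), of ennreal borel ennreal borel] by (simp add: comp_def)
  moreover have borel: "(\<lambda>_. borel) = case_bool borel borel"
    by (auto split: bool.split)
  ultimately have indep: "indep_vars (\<lambda>_. borel) (case_bool (\<lambda>\<omega>. ennreal (X1 \<omega>)) (\<lambda>\<omega>. ennreal (X2 \<omega>))) UNIV"
    unfolding indep_var_def by (subst borel)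
  have "(\<integral>\<^sup>+\<omega>. (\<Prod>i\<in>UNIV. case_bool (\<lambda>\<omega>. ennreal (X1 \<omega>)) (\<lambda>\<omega>. ennreal (X2 \<omega>)) i \<omega>) \<partial>M)
      = (\<Prod>i\<in>UNIV. \<integral>\<^sup>+\<omega>. case_bool (\<lambda>\<omega>. ennreal (X1 \<omega>)) (\<lambda>\<omega>. ennreal (X2 \<omega>)) i \<omega> \<partial>M)"
    by (rule indep_vars_nn_integral[OF _ indep]) auto
  then show ?thesis using assms(2,3) by (simp add: UNIV_bool mult.commute ennreal_mult)
qed

lemma (in prob_space) integrable_pred_indicator:
  "Measurable.pred M Q \<Longrightarrow> integrable M (\<lambda>\<omega>. if Q \<omega> then 1 else 0 :: real)"
  by (rule integrable_const_bound[where B=1]) auto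

lemma (in prob_space) integral_pred_indicator:
  assumes "Measurable.pred M Q"
  shows "(\<integral>\<omega>. (if Q \<omega> then 1 else 0 :: real) \<partial>M) = prob {\<omega>\<in>space M. Q \<omega>}"
proof -
  have "(\<integral>\<omega>. (if Q \<omega> then 1 else 0 :: real) \<partial>M) = (\<integral>\<omega>. indicator {\<omega>\<in>space M. Q \<omega>} \<omega> \<partial>M)"
    by (rule Bochner_Integration.integral_cong) (auto simp: indicator_def)
  then show ?thesis using assms by simp
qed

lemma (in prob_space) integral_sum_pred_indicator:
  assumes "finite I" "\<And>i. i \<in> I \<Longrightarrow> Measurable.pred M (Q i)"
  shows "integrable M (\<lambda>\<omega>. \<Sum>i\<in>I. if Q i \<omega> then 1 else 0 :: real)"
    and "(\<integral>\<omega>. (\<Sum>i\<in>I. if Q i \<omega> then 1 else 0 :: real) \<partial>M) = (\<Sum>i\<in>I. prob {\<omega>\<in>space M. Q i \<omega>})"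
  using assms by (simp_all add: Bochner_Integration.integral_sum integrable_pred_indicator integral_pred_indicator)

lemma measurable_PiM_PiM_component:
  "(\<lambda>w. w s a) \<in> borel_measurable (PiM I (\<lambda>_. PiM S (\<lambda>_. borel :: real measure)))"
proof -
  consider "s \<in> I" "a \<in> S" | "s \<in> I" "a \<notin> S" | "s \<notin> I" by blast
  then show ?thesis
  proof cases
    case 1
    then have "(\<lambda>w. w s) \<in> measurable (PiM I (\<lambda>_. PiM S (\<lambda>_. borel))) (PiM S (\<lambda>_. borel :: real measure))"
      by measurable
    then show ?thesis using 1 by measurable
  next
    case 2
    then show ?thesis
      by (subst measurable_cong[where g="\<lambda>w. undefined"])
        (auto simp: space_PiM PiE_def extensional_def Pi_def)
  next
    case 3
    then show ?thesis
      by (subst measurable_cong[where g="\<lambda>w. undefined a"])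
        (auto simp: space_PiM PiE_def extensional_def)
  qed
qed

section \<open>The stochastic bandit and concentration\<close>

locale bandit = mucb Ks + prob_space P
  for Ks :: "nat list" and P :: "'w measure" +
  fixes X :: "nat list \<Rightarrow> nat \<Rightarrow> 'w \<Rightarrow> real" and F :: "nat list \<Rightarrow> real measure"
  assumes measurable_X: "\<And>a t. a \<in> arm_tuples Ks \<Longrightarrow> X a t \<in> borel_measurable P"
    and distr_X: "\<And>a t. a \<in> arm_tuples Ks \<Longrightarrow> distr P borel (X a t) = F a"
    and indep_rounds: "indep_vars (\<lambda>_. PiM (arm_tuples Ks) (\<lambda>_. borel))
                         (\<lambda>t \<omega>. restrict (\<lambda>a. X a t \<omega>) (arm_tuples Ks)) UNIV"
    and F_support: "\<And>a. a \<in> arm_tuples Ks \<Longrightarrow> AE x in F a. x \<in> {0..1}"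
begin

text \<open>Rewards of lists outside the arm tuples are set to 0, so that every \<open>reward \<omega> a s\<close> is measurable.\<close>
definition reward :: "'w \<Rightarrow> nat list \<Rightarrow> nat \<Rightarrow> real" where
  "reward \<omega> a s = (if a \<in> arm_tuples Ks then X a s \<omega> else 0)"

definition mean :: "nat list \<Rightarrow> real" where
  "mean a = (\<integral>x. x \<partial>F a)"

abbreviation past_space :: "nat \<Rightarrow> (nat \<Rightarrow> nat list \<Rightarrow> real) measure" where
  "past_space t \<equiv> PiM {..t} (\<lambda>_. PiM (arm_tuples Ks) (\<lambda>_. borel))"

definition past :: "nat \<Rightarrow> 'w \<Rightarrow> nat \<Rightarrow> nat list \<Rightarrow> real" where
  "past t \<omega> = restrict (\<lambda>s. restrict (\<lambda>a. X a s \<omega>) (arm_tuples Ks)) {..t}"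

lemma measurable_reward [measurable]: "(\<lambda>\<omega>. reward \<omega> a s) \<in> borel_measurable P"
  unfolding reward_def by (cases "a \<in> arm_tuples Ks") (auto intro: measurable_X)

lemma measurable_past [measurable]: "past t \<in> measurable P (past_space t)"
  unfolding past_def using measurable_X by measurable

lemma past_eq_reward: "\<forall>b\<in>arm_tuples Ks. \<forall>s\<in>{1..t}. past t \<omega> s b = reward \<omega> b s"
  by (auto simp: past_def reward_def)

lemma indep_past_round:
  assumes a: "a \<in> arm_tuples Ks"
    and [measurable]: "f \<in> borel_measurable (past_space t)" "g \<in> borel_measurable borel"
  shows "indep_var borel (\<lambda>\<omega>. f (past t \<omega>)) borel (\<lambda>\<omega>. g (X a (Suc t) \<omega>))"
proof -
  let ?next = "\<lambda>\<omega>. restrict (\<lambda>i. restrict (\<lambda>a. X a i \<omega>) (arm_tuples Ks)) {Suc t}"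
  have "indep_var (past_space t) (past t) (PiM {Suc t} (\<lambda>_. PiM (arm_tuples Ks) (\<lambda>_. borel))) ?next"
    unfolding past_def by (rule indep_var_restrict[OF indep_rounds]) auto
  moreover have "(\<lambda>v. g (v (Suc t) a)) \<in> borel_measurable (PiM {Suc t} (\<lambda>_. PiM (arm_tuples Ks) (\<lambda>_. borel)))"
    using measurable_PiM_PiM_component by measurable
  ultimately have "indep_var borel (f \<circ> past t) borel ((\<lambda>v. g (v (Suc t) a)) \<circ> ?next)"
    using indep_var_compose assms(2) by blast
  moreover have "(\<lambda>v. g (v (Suc t) a)) \<circ> ?next = (\<lambda>\<omega>. g (X a (Suc t) \<omega>))"
    using a by (auto simp: fun_eq_iff)
  ultimately show ?thesis by (simp add: comp_def)
qed

lemma prob_space_F: "a \<in> arm_tuples Ks \<Longrightarrow> prob_space (F a)"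
  using prob_space_distr[OF measurable_X, of a 0] distr_X[of a 0] by simp

lemma measurable_F_iff: "a \<in> arm_tuples Ks \<Longrightarrow> measurable (F a) N = measurable borel N"
  using distr_X[of a 0] by (intro measurable_cong_sets) (metis sets_distr, simp)

lemma nn_integral_past_round:
  assumes a: "a \<in> arm_tuples Ks"
    and [measurable]: "f \<in> borel_measurable (past_space t)" "g \<in> borel_measurable borel"
    and "\<And>w. 0 \<le> f w" "\<And>x. 0 \<le> g x"
  shows "(\<integral>\<^sup>+\<omega>. ennreal (f (past t \<omega>) * g (X a (Suc t) \<omega>)) \<partial>P) =
         (\<integral>\<^sup>+\<omega>. ennreal (f (past t \<omega>)) \<partial>P) * (\<integral>\<^sup>+x. ennreal (g x) \<partial>F a)"
proof -
  have "(\<integral>\<^sup>+x. ennreal (g x) \<partial>F a) = (\<integral>\<^sup>+\<omega>. ennreal (g (X a (Suc t) \<omega>)) \<partial>P)"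
    using distr_X[OF a, of "Suc t"] nn_integral_distr[OF measurable_X[OF a, of "Suc t"], of "\<lambda>x. ennreal (g x)"]
    by (simp add: measurable_F_iff[OF a])
  then show ?thesis using indep_var_nn_integral[OF indep_past_round[OF assms(1-3)]] assms(4,5) by simp
qed

lemma interval_bounded_F:
  assumes a: "a \<in> arm_tuples Ks" and sg: "sg \<in> {1, -1}"
  shows "interval_bounded_random_variable (F a) (\<lambda>x. sg * x) (min 0 sg) (max 0 sg)"
proof -
  have "AE x in F a. sg * x \<in> {min 0 sg..max 0 sg}"
    using F_support[OF a] by eventually_elim (use sg in auto)
  moreover have "(\<lambda>x. sg * x) \<in> borel_measurable (F a)" by (simp add: measurable_F_iff[OF a])
  ultimately show ?thesis
    using prob_space_F[OF a]
    by (simp add: interval_bounded_random_variable_def interval_bounded_random_variable_axioms_def)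
qed

lemma integrable_F: "a \<in> arm_tuples Ks \<Longrightarrow> integrable (F a) (\<lambda>x. x)"
  using interval_bounded_random_variable.integrable[OF interval_bounded_F[of a 1]] by simp

lemma mean_bounds: "a \<in> arm_tuples Ks \<Longrightarrow> 0 \<le> mean a \<and> mean a \<le> 1"
proof -
  assume a: "a \<in> arm_tuples Ks"
  interpret Fa: prob_space "F a" by (rule prob_space_F[OF a])
  have "0 \<le> mean a" unfolding mean_def
    by (rule integral_nonneg_AE) (use F_support[OF a] in \<open>auto elim: eventually_mono\<close>)
  moreover have "mean a \<le> (\<integral>x. 1 \<partial>F a)" unfolding mean_def
    by (rule integral_mono_AE) (use F_support[OF a] integrable_F[OF a] in \<open>auto elim: eventually_mono\<close>)
  ultimately show ?thesis by (simp add: Fa.prob_space)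
qed

lemma hoeffding_F:
  assumes a: "a \<in> arm_tuples Ks" and sg: "sg \<in> {1, -1}" and "0 < l"
  shows "(\<integral>\<^sup>+x. ennreal (exp (l * (sg * (x - mean a)) - l\<^sup>2 / 8)) \<partial>F a) \<le> 1"
proof -
  have "(\<integral>\<^sup>+x. ennreal (exp (l * (sg * x - sg * mean a))) \<partial>F a) \<le> ennreal (exp (l\<^sup>2 / 8))"
    using interval_bounded_random_variable.Hoeffdings_lemma_nn_integral[OF interval_bounded_F[OF a sg] \<open>0 < l\<close>]
      sg by (auto simp: mean_def)
  moreover have "ennreal (exp (l * (sg * (x - mean a)) - l\<^sup>2 / 8))
      = ennreal (exp (l * (sg * x - sg * mean a))) * ennreal (exp (- (l\<^sup>2 / 8)))" for x
    by (simp add: exp_add[symmetric] algebra_simps flip: ennreal_mult)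
  moreover have "(\<integral>\<^sup>+x. ennreal (exp (l * (sg * x - sg * mean a))) * ennreal (exp (- (l\<^sup>2 / 8))) \<partial>F a)
      = (\<integral>\<^sup>+x. ennreal (exp (l * (sg * x - sg * mean a))) \<partial>F a) * ennreal (exp (- (l\<^sup>2 / 8)))"
    by (rule nn_integral_multc) (simp add: measurable_F_iff[OF a])
  ultimately have "(\<integral>\<^sup>+x. ennreal (exp (l * (sg * (x - mean a)) - l\<^sup>2 / 8)) \<partial>F a)
      \<le> ennreal (exp (l\<^sup>2 / 8)) * ennreal (exp (- (l\<^sup>2 / 8)))"
    by (simp add: mult_right_mono)
  also have "\<dots> = 1" by (simp flip: ennreal_mult' add: exp_minus)
  finally show ?thesis .
qed

lemma nn_integral_past_round_le:
  assumes a: "a \<in> arm_tuples Ks"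
    and [measurable]: "f \<in> borel_measurable (past_space t)" "f' \<in> borel_measurable (past_space t)"
      "g \<in> borel_measurable borel"
    and nonneg: "\<And>w. 0 \<le> f w" "\<And>w. 0 \<le> f' w" "\<And>x. 0 \<le> g x"
    and g: "(\<integral>\<^sup>+x. ennreal (g x) \<partial>F a) \<le> 1"
  shows "(\<integral>\<^sup>+\<omega>. ennreal (f' (past t \<omega>) + f (past t \<omega>) * g (X a (Suc t) \<omega>)) \<partial>P)
       \<le> (\<integral>\<^sup>+\<omega>. ennreal (f' (past t \<omega>) + f (past t \<omega>)) \<partial>P)"
proof -
  have [measurable]: "(\<lambda>\<omega>. f (past t \<omega>)) \<in> borel_measurable P" "(\<lambda>\<omega>. f' (past t \<omega>)) \<in> borel_measurable P"
    "(\<lambda>\<omega>. g (X a (Suc t) \<omega>)) \<in> borel_measurable P"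
    using measurable_X[OF a] by measurable
  have "(\<integral>\<^sup>+\<omega>. ennreal (f' (past t \<omega>) + f (past t \<omega>) * g (X a (Suc t) \<omega>)) \<partial>P)
      = (\<integral>\<^sup>+\<omega>. ennreal (f' (past t \<omega>)) + ennreal (f (past t \<omega>) * g (X a (Suc t) \<omega>)) \<partial>P)"
    using nonneg by (intro nn_integral_cong) (simp add: ennreal_plus)
  also have "\<dots> = (\<integral>\<^sup>+\<omega>. ennreal (f' (past t \<omega>)) \<partial>P)
      + (\<integral>\<^sup>+\<omega>. ennreal (f (past t \<omega>) * g (X a (Suc t) \<omega>)) \<partial>P)"
    by (rule nn_integral_add) simp_all
  also have "(\<integral>\<^sup>+\<omega>. ennreal (f (past t \<omega>) * g (X a (Suc t) \<omega>)) \<partial>P)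
      = (\<integral>\<^sup>+\<omega>. ennreal (f (past t \<omega>)) \<partial>P) * (\<integral>\<^sup>+x. ennreal (g x) \<partial>F a)"
    using nonneg by (intro nn_integral_past_round[OF a]) simp_all
  also have "\<dots> \<le> (\<integral>\<^sup>+\<omega>. ennreal (f (past t \<omega>)) \<partial>P)"
    using mult_left_mono[OF g, of "\<integral>\<^sup>+\<omega>. ennreal (f (past t \<omega>)) \<partial>P"] by simp
  also have "(\<integral>\<^sup>+\<omega>. ennreal (f' (past t \<omega>)) \<partial>P) + (\<integral>\<^sup>+\<omega>. ennreal (f (past t \<omega>)) \<partial>P)
      = (\<integral>\<^sup>+\<omega>. ennreal (f' (past t \<omega>) + f (past t \<omega>)) \<partial>P)"
    using nonneg by (subst nn_integral_add[symmetric]) (simp_all add: ennreal_plus)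
  finally show ?thesis by (simp add: add_left_mono)
qed

text \<open>Whether round \<open>t + 1\<close> contributes a factor is decided by the rewards before that round,
  which are independent of its rewards; Hoeffding's lemma bounds the expected factor by 1.\<close>
lemma nn_integral_exp_supermartingale_Suc_le:
  assumes a: "a \<in> arm_tuples Ks" and sg: "sg \<in> {1, -1}" and l: "0 < l"
  shows "(\<integral>\<^sup>+\<omega>. ennreal (exp_supermartingale Ks (reward \<omega>) mean a n l sg (Suc t)) \<partial>P)
       \<le> (\<integral>\<^sup>+\<omega>. ennreal (exp_supermartingale Ks (reward \<omega>) mean a n l sg t) \<partial>P)"
proof -
  let ?Z = "\<lambda>r. exp_supermartingale Ks r mean a n l sg t"
  let ?sel = "\<lambda>r. among_first_plays (mucb_action Ks r) a n (Suc t)"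
  define g where "g = (\<lambda>x. exp (l * (sg * (x - mean a)) - l\<^sup>2 / 8))"
  define f where "f = (\<lambda>w. if ?sel (\<lambda>a s. w s a) then ?Z (\<lambda>a s. w s a) else 0)"
  define f' where "f' = (\<lambda>w. if ?sel (\<lambda>a s. w s a) then 0 else ?Z (\<lambda>a s. w s a))"
  have [measurable]: "Measurable.pred (past_space t) (\<lambda>w. ?sel (\<lambda>a s. w s a))"
    by (rule pred_among_first_plays) (rule measurable_PiM_PiM_component)
  have [measurable]: "(\<lambda>w. ?Z (\<lambda>a s. w s a)) \<in> borel_measurable (past_space t)"
    by (rule measurable_exp_supermartingale) (rule measurable_PiM_PiM_component)
  have sel_past: "?sel (\<lambda>a s. past t \<omega> s a) = ?sel (reward \<omega>)" for \<omega>
    using past_eq_reward by (intro among_first_plays_cong) auto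
  have Z_past: "?Z (\<lambda>a s. past t \<omega> s a) = ?Z (reward \<omega>)" for \<omega>
    using past_eq_reward by (intro exp_supermartingale_cong[OF a]) auto
  have "exp_supermartingale Ks (reward \<omega>) mean a n l sg (Suc t)
      = f' (past t \<omega>) + f (past t \<omega>) * g (X a (Suc t) \<omega>)" for \<omega>
    using a by (simp add: exp_supermartingale_Suc f_def f'_def g_def sel_past Z_past reward_def)
  then have "(\<integral>\<^sup>+\<omega>. ennreal (exp_supermartingale Ks (reward \<omega>) mean a n l sg (Suc t)) \<partial>P)
      = (\<integral>\<^sup>+\<omega>. ennreal (f' (past t \<omega>) + f (past t \<omega>) * g (X a (Suc t) \<omega>)) \<partial>P)"
    by simp
  also have "\<dots> \<le> (\<integral>\<^sup>+\<omega>. ennreal (f' (past t \<omega>) + f (past t \<omega>)) \<partial>P)"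
    using hoeffding_F[OF a sg l] exp_supermartingale_nonneg
    by (intro nn_integral_past_round_le[OF a]) (simp_all add: f_def f'_def g_def)
  also have "\<dots> = (\<integral>\<^sup>+\<omega>. ennreal (exp_supermartingale Ks (reward \<omega>) mean a n l sg t) \<partial>P)"
    by (intro nn_integral_cong) (simp add: f_def f'_def sel_past Z_past)
  finally show ?thesis .
qed

lemma nn_integral_exp_supermartingale_le_1:
  assumes "a \<in> arm_tuples Ks" "sg \<in> {1, -1}" "0 < l"
  shows "(\<integral>\<^sup>+\<omega>. ennreal (exp_supermartingale Ks (reward \<omega>) mean a n l sg t) \<partial>P) \<le> 1"
proof (induction t)
  case 0
  then show ?case by (simp add: exp_supermartingale_def emeasure_space_1)
next
  case (Suc t)
  then show ?case using nn_integral_exp_supermartingale_Suc_le[OF assms, of n t] by simp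
qed

lemma measurable_first_rewards_dev_reward [measurable]:
  "(\<lambda>\<omega>. first_rewards_dev Ks (reward \<omega>) \<mu> T a n) \<in> borel_measurable P"
  by (rule measurable_first_rewards_dev) (rule measurable_reward)

text \<open>Chernoff's bound for the exponential supermartingale, with the optimal \<open>l = 4 * x / n\<close>.\<close>
lemma prob_first_rewards_dev_ge:
  assumes a: "a \<in> arm_tuples Ks" and sg: "sg \<in> {1, -1}" and x: "0 < x" and n: "1 \<le> n"
  shows "prob {\<omega>\<in>space P. x \<le> sg * first_rewards_dev Ks (reward \<omega>) mean T a n} \<le> exp (- 2 * x\<^sup>2 / real n)"
proof -
  define l where "l = 4 * x / real n"
  define E where "E = {\<omega>\<in>space P. x \<le> sg * first_rewards_dev Ks (reward \<omega>) mean T a n}"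
  define c where "c = exp (l * x - l\<^sup>2 / 8 * real n)"
  have l: "0 < l" using x n by (simp add: l_def)
  have E: "E \<in> sets P" unfolding E_def by measurable
  have "ennreal c * indicator E \<omega> \<le> ennreal (exp_supermartingale Ks (reward \<omega>) mean a n l sg T)" for \<omega>
  proof (cases "\<omega> \<in> E")
    case True
    then have "c \<le> exp (l * (sg * first_rewards_dev Ks (reward \<omega>) mean T a n) - l\<^sup>2 / 8 * real n)"
      using l by (simp add: E_def c_def)
    also have "\<dots> \<le> exp_supermartingale Ks (reward \<omega>) mean a n l sg T"
      by (rule exp_supermartingale_ge[OF l])
    finally show ?thesis using True by (simp add: ennreal_leI)
  qed simp
  then have "ennreal c * emeasure P E \<le> (\<integral>\<^sup>+\<omega>. ennreal (exp_supermartingale Ks (reward \<omega>) mean a n l sg T) \<partial>P)"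
    by (simp add: nn_integral_cmult_indicator[OF E, symmetric] nn_integral_mono)
  also have "\<dots> \<le> 1" by (rule nn_integral_exp_supermartingale_le_1[OF a sg l])
  finally have "c * prob E \<le> 1"
    by (simp add: emeasure_eq_measure c_def flip: ennreal_mult)
  then have "prob E \<le> 1 / c" by (simp add: c_def field_simps)
  also have "l * x - l\<^sup>2 / 8 * real n = 2 * x\<^sup>2 / real n"
    using n by (simp add: l_def power2_eq_square field_simps)
  then have "1 / c = exp (- 2 * x\<^sup>2 / real n)" by (simp add: c_def exp_minus field_simps)
  finally show ?thesis unfolding E_def .
qed

lemma prob_first_rewards_dev_below_radius:
  assumes a: "a \<in> arm_tuples Ks" and t: "2 \<le> t" and n: "1 \<le> n"
  shows "prob {\<omega>\<in>space P. first_rewards_dev Ks (reward \<omega>) mean T a n < - conf_radius t n} \<le> 1 / real t ^ 8"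
proof -
  have "0 < ln (real t)" using t by simp
  then have x: "0 < conf_radius t n" using n by (simp add: conf_radius_def)
  have "prob {\<omega>\<in>space P. first_rewards_dev Ks (reward \<omega>) mean T a n < - conf_radius t n}
      \<le> prob {\<omega>\<in>space P. conf_radius t n \<le> -1 * first_rewards_dev Ks (reward \<omega>) mean T a n}"
    by (rule finite_measure_mono) auto
  also have "\<dots> \<le> exp (- 2 * (conf_radius t n)\<^sup>2 / real n)"
    by (rule prob_first_rewards_dev_ge[OF a _ x n]) simp
  also have "\<dots> = exp (- (real 8 * ln (real t)))"
    using \<open>0 < ln (real t)\<close> n by (simp add: conf_radius_def)
  also have "\<dots> = 1 / real t ^ 8"
    using t by (intro exp_minus_mult_ln) simp
  finally show ?thesis .
qed

lemma sum_prob_first_rewards_dev_above: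
  assumes a: "a \<in> arm_tuples Ks" and T: "2 \<le> T" and D: "0 < D"
  shows "(\<Sum>n\<in>{1..T}. prob {\<omega>\<in>space P. real n * D - conf_radius T n \<le> first_rewards_dev Ks (reward \<omega>) mean T a n})
     \<le> (6 + 4 * sqrt 2) * ln (real T) / D\<^sup>2 + 1"
proof -
  define L where "L = ln (real T)"
  define u where "u = (6 + 4 * sqrt 2) * L / D\<^sup>2"
  have L: "0 < L" using T by (simp add: L_def)
  have u: "0 < u" unfolding u_def using L D by (simp add: add_pos_nonneg)
  have each: "prob {\<omega>\<in>space P. real n * D - conf_radius T n \<le> first_rewards_dev Ks (reward \<omega>) mean T a n}
      \<le> (if real n < u then 1 else 0) + 1 / real T" if n: "n \<in> {1..T}" for n
  proof (cases "real n < u")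
    case True
    have "prob {\<omega>\<in>space P. real n * D - conf_radius T n \<le> first_rewards_dev Ks (reward \<omega>) mean T a n} \<le> 1"
      by (rule prob_le_1)
    moreover have "0 \<le> 1 / real T" by simp
    moreover have "(if real n < u then 1 else 0) = (1::real)" using True by simp
    ultimately show ?thesis by linarith
  next
    case False
    define x where "x = real n * D - conf_radius T n"
    have x: "0 < x" "4 * L \<le> 2 * x\<^sup>2 / real n"
      using deviation_margin[of n L D] n L D False by (auto simp: u_def x_def conf_radius_def L_def)
    have "prob {\<omega>\<in>space P. real n * D - conf_radius T n \<le> first_rewards_dev Ks (reward \<omega>) mean T a n}
        \<le> exp (- 2 * x\<^sup>2 / real n)"
      using prob_first_rewards_dev_ge[OF a _ x(1), of 1 n] n by (simp add: x_def)
    also have "\<dots> \<le> exp (- (real 4 * L))" using x(2) by simp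
    also have "\<dots> = 1 / real T ^ 4" unfolding L_def using T by (intro exp_minus_mult_ln) simp
    also have "\<dots> \<le> 1 / real T" using T by (simp add: frac_le self_le_power)
    finally show ?thesis using False by simp
  qed
  have "(\<Sum>n\<in>{1..T}. prob {\<omega>\<in>space P. real n * D - conf_radius T n \<le> first_rewards_dev Ks (reward \<omega>) mean T a n})
      \<le> (\<Sum>n\<in>{1..T}. (if real n < u then 1 else 0) + 1 / real T)"
    by (rule sum_mono) (rule each)
  also have "\<dots> = real (card {n\<in>{1..T}. real n < u}) + 1"
    using T by (simp add: sum.distrib sum_indicator_eq_card)
  also have "\<dots> \<le> u + 1" using card_below_le[OF u] by simp
  finally show ?thesis unfolding u_def L_def .
qed

section \<open>Expected regret\<close>

definition action :: "nat \<Rightarrow> 'w \<Rightarrow> nat list" where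
  "action t \<omega> = mucb_action Ks (reward \<omega>) t"

lemma action_in_arm_tuples: "action t \<omega> \<in> arm_tuples Ks"
  unfolding action_def by (rule mucb_action_in_arm_tuples)

lemma mucb_action_X: "mucb_action Ks (\<lambda>a s. X a s \<omega>) t = action t \<omega>"
  unfolding action_def by (rule mucb_action_cong) (auto simp: reward_def)

lemma pred_action: "Measurable.pred P (\<lambda>\<omega>. Q (action t \<omega>))"
  unfolding action_def mucb_action_eq_last by (rule pred_mucb_hist) (rule measurable_reward)

lemma integrable_X:
  assumes "a \<in> arm_tuples Ks"
  shows "integrable P (X a t)"
proof -
  have "integrable (distr P borel (X a t)) (\<lambda>x. x)" using integrable_F[OF assms] distr_X[OF assms] by simp
  then show ?thesis using integrable_distr_eq[OF measurable_X[OF assms], of "\<lambda>x. x"] by simp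
qed

lemma integral_X:
  assumes "a \<in> arm_tuples Ks"
  shows "(\<integral>\<omega>. X a t \<omega> \<partial>P) = mean a"
  using integral_distr[OF measurable_X[OF assms], of "\<lambda>x. x"] distr_X[OF assms] by (simp add: mean_def)

lemma integral_X_if_action:
  assumes b: "b \<in> arm_tuples Ks"
  shows "integrable P (\<lambda>\<omega>. (if action (Suc t) \<omega> = b then 1 else 0) * X b (Suc t) \<omega>)"
    and "(\<integral>\<omega>. (if action (Suc t) \<omega> = b then 1 else 0) * X b (Suc t) \<omega> \<partial>P)
           = prob {\<omega>\<in>space P. action (Suc t) \<omega> = b} * mean b"
proof -
  define f where "f = (\<lambda>w. if mucb_action Ks (\<lambda>a s. w s a) (Suc t) = b then 1 else 0::real)"
  have "Measurable.pred (past_space t) (\<lambda>w. mucb_action Ks (\<lambda>a s. w s a) (Suc t) = b)"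
    unfolding mucb_action_eq_last by (rule pred_mucb_hist) (rule measurable_PiM_PiM_component)
  then have f: "f \<in> borel_measurable (past_space t)" unfolding f_def by measurable
  have f_past: "f (past t \<omega>) = (if action (Suc t) \<omega> = b then 1 else 0)" for \<omega>
  proof -
    have "mucb_action Ks (\<lambda>a s. past t \<omega> s a) (Suc t) = action (Suc t) \<omega>"
      unfolding action_def using past_eq_reward by (intro mucb_action_cong) auto
    then show ?thesis by (simp add: f_def)
  qed
  have indep: "indep_var borel (\<lambda>\<omega>. f (past t \<omega>)) borel (X b (Suc t))"
    using indep_past_round[OF b f, of "\<lambda>x. x"] by simp
  have "integrable P (\<lambda>\<omega>. f (past t \<omega>))"
    unfolding f_past by (rule integrable_pred_indicator[OF pred_action])
  note * = this integrable_X[OF b]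
  show "integrable P (\<lambda>\<omega>. (if action (Suc t) \<omega> = b then 1 else 0) * X b (Suc t) \<omega>)"
    using indep_var_integrable[OF indep *] unfolding f_past .
  show "(\<integral>\<omega>. (if action (Suc t) \<omega> = b then 1 else 0) * X b (Suc t) \<omega> \<partial>P)
      = prob {\<omega>\<in>space P. action (Suc t) \<omega> = b} * mean b"
    using indep_var_lebesgue_integral[OF indep *] integral_X[OF b, of "Suc t"]
      integral_pred_indicator[OF pred_action, of "\<lambda>a. a = b" "Suc t"]
    unfolding f_past by simp
qed

lemma integral_X_action:
  assumes "1 \<le> t"
  shows "integrable P (\<lambda>\<omega>. X (action t \<omega>) t \<omega>)"
    and "(\<integral>\<omega>. X (action t \<omega>) t \<omega> \<partial>P) = (\<integral>\<omega>. mean (action t \<omega>) \<partial>P)"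
proof -
  obtain s where t: "t = Suc s" using assms by (cases t) auto
  have X_sum: "X (action t \<omega>) t \<omega> = (\<Sum>b\<in>arm_tuples Ks. (if action t \<omega> = b then 1 else 0) * X b t \<omega>)"
    and mean_sum: "mean (action t \<omega>) = (\<Sum>b\<in>arm_tuples Ks. (if action t \<omega> = b then 1 else 0) * mean b)"
    for \<omega> by (simp_all add: sum_indicator_mult_eq[OF action_in_arm_tuples arm_tuples_finite])
  have int: "integrable P (\<lambda>\<omega>. (if action t \<omega> = b then 1 else 0) * X b t \<omega>)" if "b \<in> arm_tuples Ks" for b
    using integral_X_if_action(1)[OF that] t by simp
  show "integrable P (\<lambda>\<omega>. X (action t \<omega>) t \<omega>)"
    unfolding X_sum using int by (intro Bochner_Integration.integrable_sum) auto
  have "(\<integral>\<omega>. X (action t \<omega>) t \<omega> \<partial>P)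
      = (\<Sum>b\<in>arm_tuples Ks. \<integral>\<omega>. (if action t \<omega> = b then 1 else 0) * X b t \<omega> \<partial>P)"
    unfolding X_sum using int by (intro Bochner_Integration.integral_sum) auto
  also have "\<dots> = (\<Sum>b\<in>arm_tuples Ks. prob {\<omega>\<in>space P. action t \<omega> = b} * mean b)"
    using integral_X_if_action(2) t by (intro sum.cong) auto
  also have "\<dots> = (\<Sum>b\<in>arm_tuples Ks. \<integral>\<omega>. (if action t \<omega> = b then 1 else 0) * mean b \<partial>P)"
    by (intro sum.cong refl) (simp add: integral_pred_indicator[OF pred_action, of "\<lambda>a. a = _"])
  also have "\<dots> = (\<integral>\<omega>. mean (action t \<omega>) \<partial>P)"
    unfolding mean_sum
    by (intro Bochner_Integration.integral_sum[symmetric] integrable_mult_left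
        integrable_pred_indicator pred_action)
  finally show "(\<integral>\<omega>. X (action t \<omega>) t \<omega> \<partial>P) = (\<integral>\<omega>. mean (action t \<omega>) \<partial>P)" .
qed

lemma integrable_mean_action: "integrable P (\<lambda>\<omega>. mean (action t \<omega>))"
proof -
  have "mean (action t \<omega>) = (\<Sum>b\<in>arm_tuples Ks. (if action t \<omega> = b then 1 else 0) * mean b)" for \<omega>
    by (simp add: sum_indicator_mult_eq[OF action_in_arm_tuples arm_tuples_finite])
  then show ?thesis
    by (simp only:) (intro Bochner_Integration.integrable_sum integrable_mult_left
        integrable_pred_indicator pred_action)
qed

lemma regret_eq_expected_pseudo_regret:
  "(\<integral>\<omega>. (real T * m - (\<Sum>t=1..T. X (mucb_action Ks (\<lambda>a s. X a s \<omega>) t) t \<omega>)) \<partial>P)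
   = (\<integral>\<omega>. (\<Sum>t=1..T. m - mean (action t \<omega>)) \<partial>P)"
proof -
  have int_X: "integrable P (\<lambda>\<omega>. \<Sum>t=1..T. X (action t \<omega>) t \<omega>)"
    using integral_X_action(1) by (intro Bochner_Integration.integrable_sum) auto
  have int_mean: "integrable P (\<lambda>\<omega>. \<Sum>t=1..T. mean (action t \<omega>))"
    using integrable_mean_action by (intro Bochner_Integration.integrable_sum) auto
  have "(\<integral>\<omega>. (\<Sum>t=1..T. X (action t \<omega>) t \<omega>) \<partial>P) = (\<Sum>t=1..T. \<integral>\<omega>. X (action t \<omega>) t \<omega> \<partial>P)"
    using integral_X_action(1) by (intro Bochner_Integration.integral_sum) auto
  also have "\<dots> = (\<Sum>t=1..T. \<integral>\<omega>. mean (action t \<omega>) \<partial>P)"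
    using integral_X_action(2) by (intro sum.cong) auto
  also have "\<dots> = (\<integral>\<omega>. (\<Sum>t=1..T. mean (action t \<omega>)) \<partial>P)"
    using integrable_mean_action by (intro Bochner_Integration.integral_sum[symmetric]) auto
  finally have "(\<integral>\<omega>. (\<Sum>t=1..T. X (action t \<omega>) t \<omega>) \<partial>P) = (\<integral>\<omega>. (\<Sum>t=1..T. mean (action t \<omega>)) \<partial>P)" .
  then show ?thesis
    using int_X int_mean by (simp add: mucb_action_X sum_subtractf prob_space)
qed

lemma expected_pseudo_regret_decomposition:
  assumes astar: "astar \<in> arm_tuples Ks" and opt: "\<forall>b\<in>arm_tuples Ks. mean b \<le> mean astar" and "0 \<le> \<epsilon>"
  shows "(\<integral>\<omega>. (\<Sum>t=1..T. mean astar - mean (action t \<omega>)) \<partial>P) \<le> real (prod_list Ks) + \<epsilon> * real T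
     + (\<Sum>t\<in>{prod_list Ks..<T}. \<Sum>n\<in>{1..t}.
          prob {\<omega>\<in>space P. first_rewards_dev Ks (reward \<omega>) mean T astar n < - conf_radius t n})
     + (\<Sum>a | a \<in> arm_tuples Ks \<and> \<epsilon> < mean astar - mean a. (mean astar - mean a) * (1 + (\<Sum>n\<in>{1..T}.
          prob {\<omega>\<in>space P. real n * (mean astar - mean a) - conf_radius T n
                            \<le> first_rewards_dev Ks (reward \<omega>) mean T a n})))"
proof -
  let ?Bad = "{a. a \<in> arm_tuples Ks \<and> \<epsilon> < mean astar - mean a}"
  define D where "D t n \<omega> \<longleftrightarrow> first_rewards_dev Ks (reward \<omega>) mean T astar n < - conf_radius t n" for t n \<omega>
  define B where "B a n \<omega> \<longleftrightarrow> real n * (mean astar - mean a) - conf_radius T n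
                                 \<le> first_rewards_dev Ks (reward \<omega>) mean T a n" for a n \<omega>
  have "Measurable.pred P (D t n)" "Measurable.pred P (B a n)" for t n a
    unfolding D_def B_def by measurable
  then have D: "integrable P (\<lambda>\<omega>. \<Sum>n\<in>{1..t}. if D t n \<omega> then 1 else 0::real)"
      "(\<integral>\<omega>. (\<Sum>n\<in>{1..t}. if D t n \<omega> then 1 else 0::real) \<partial>P) = (\<Sum>n\<in>{1..t}. prob {\<omega>\<in>space P. D t n \<omega>})"
    and B: "integrable P (\<lambda>\<omega>. \<Sum>n\<in>{1..T}. if B a n \<omega> then 1 else 0::real)"
      "(\<integral>\<omega>. (\<Sum>n\<in>{1..T}. if B a n \<omega> then 1 else 0::real) \<partial>P) = (\<Sum>n\<in>{1..T}. prob {\<omega>\<in>space P. B a n \<omega>})"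
    for t a by (simp_all add: integral_sum_pred_indicator)
  define S1 where "S1 \<omega> = (\<Sum>t\<in>{prod_list Ks..<T}. \<Sum>n\<in>{1..t}. if D t n \<omega> then 1 else 0::real)" for \<omega>
  define S2 where "S2 \<omega> = (\<Sum>a\<in>?Bad. (mean astar - mean a) * (1 + (\<Sum>n\<in>{1..T}. if B a n \<omega> then 1 else 0::real)))"
    for \<omega>
  have S1: "integrable P S1" "(\<integral>\<omega>. S1 \<omega> \<partial>P) = (\<Sum>t\<in>{prod_list Ks..<T}. \<Sum>n\<in>{1..t}. prob {\<omega>\<in>space P. D t n \<omega>})"
    unfolding S1_def using D by (simp_all add: Bochner_Integration.integral_sum)
  have S2: "integrable P S2"
    "(\<integral>\<omega>. S2 \<omega> \<partial>P) = (\<Sum>a\<in>?Bad. (mean astar - mean a) * (1 + (\<Sum>n\<in>{1..T}. prob {\<omega>\<in>space P. B a n \<omega>})))"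
    unfolding S2_def using B by (simp_all add: Bochner_Integration.integral_sum prob_space)
  have "0 \<le> mean astar - mean b \<and> mean astar - mean b \<le> 1" if "b \<in> arm_tuples Ks" for b
    using opt mean_bounds[OF that] mean_bounds[OF astar] that by auto
  then have pointwise: "(\<Sum>t=1..T. mean astar - mean (action t \<omega>)) \<le> real (prod_list Ks) + \<epsilon> * real T + S1 \<omega> + S2 \<omega>" for \<omega>
    using pseudo_regret_decomposition[OF astar _ \<open>0 \<le> \<epsilon>\<close>, where \<mu>=mean and T=T and r="reward \<omega>"]
    by (simp add: S1_def S2_def D_def B_def action_def)
  have "(\<integral>\<omega>. (\<Sum>t=1..T. mean astar - mean (action t \<omega>)) \<partial>P)
      \<le> (\<integral>\<omega>. real (prod_list Ks) + \<epsilon> * real T + S1 \<omega> + S2 \<omega> \<partial>P)"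
  proof (rule integral_mono)
    show "integrable P (\<lambda>\<omega>. \<Sum>t=1..T. mean astar - mean (action t \<omega>))"
      by (intro Bochner_Integration.integrable_sum Bochner_Integration.integrable_diff
          integrable_const integrable_mean_action)
    show "integrable P (\<lambda>\<omega>. real (prod_list Ks) + \<epsilon> * real T + S1 \<omega> + S2 \<omega>)"
      by (intro Bochner_Integration.integrable_add integrable_const S1(1) S2(1))
  qed (rule pointwise)
  also have "\<dots> = real (prod_list Ks) + \<epsilon> * real T + (\<integral>\<omega>. S1 \<omega> \<partial>P) + (\<integral>\<omega>. S2 \<omega> \<partial>P)"
    using S1(1) S2(1) by (simp add: prob_space)
  finally show ?thesis by (simp add: S1(2) S2(2) D_def B_def)
qed

lemma sum_prob_first_rewards_dev_below_radius_le_1: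
  assumes a: "a \<in> arm_tuples Ks" and K: "2 \<le> K"
  shows "(\<Sum>t\<in>{K..<T}. \<Sum>n\<in>{1..t}.
           prob {\<omega>\<in>space P. first_rewards_dev Ks (reward \<omega>) mean T a n < - conf_radius t n}) \<le> 1"
proof -
  have "(\<Sum>t\<in>{K..<T}. \<Sum>n\<in>{1..t}.
           prob {\<omega>\<in>space P. first_rewards_dev Ks (reward \<omega>) mean T a n < - conf_radius t n})
      \<le> (\<Sum>t\<in>{K..<T}. \<Sum>n\<in>{1..t}. 1 / real t ^ 8)"
    using K by (intro sum_mono prob_first_rewards_dev_below_radius[OF a]) auto
  also have "\<dots> \<le> (\<Sum>t\<in>{K..<T}. 1 / (real t)\<^sup>2)"
  proof (rule sum_mono)
    fix t assume "t \<in> {K..<T}"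
    then have t: "1 \<le> real t" using K by simp
    have "(\<Sum>n\<in>{1..t}. 1 / real t ^ 8) = 1 / real t ^ 7"
      using t by (simp add: power_Suc[symmetric] field_simps del: power_Suc)
    also have "\<dots> \<le> 1 / (real t)\<^sup>2" using t by (intro divide_left_mono power_increasing) auto
    finally show "(\<Sum>n\<in>{1..t}. 1 / real t ^ 8) \<le> 1 / (real t)\<^sup>2" .
  qed
  also have "\<dots> \<le> 1" by (rule sum_inverse_squares_le_1[OF K])
  finally show ?thesis .
qed

lemma suboptimal_cost_le:
  assumes a: "a \<in> arm_tuples Ks" and T: "2 \<le> T" and D: "sqrt (ln (real T) / real T) < D" "D \<le> 1"
  shows "D * (1 + (\<Sum>n\<in>{1..T}.
           prob {\<omega>\<in>space P. real n * D - conf_radius T n \<le> first_rewards_dev Ks (reward \<omega>) mean T a n}))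
         \<le> 2 + (6 + 4 * sqrt 2) * sqrt (real T * ln (real T))"
proof -
  define c where "c = 6 + 4 * sqrt (2::real)"
  define L where "L = ln (real T)"
  have L: "0 < L" using T by (simp add: L_def)
  have eps: "0 < sqrt (L / real T)" using L T by simp
  have "0 < D" using D(1) eps unfolding L_def by linarith
  have "D * (1 + (\<Sum>n\<in>{1..T}.
           prob {\<omega>\<in>space P. real n * D - conf_radius T n \<le> first_rewards_dev Ks (reward \<omega>) mean T a n}))
      \<le> D * (2 + c * L / D\<^sup>2)"
    using sum_prob_first_rewards_dev_above[OF a T \<open>0 < D\<close>] \<open>0 < D\<close>
    by (intro mult_left_mono) (auto simp: c_def L_def)
  also have "\<dots> = 2 * D + c * L / D" using \<open>0 < D\<close> by (simp add: field_simps power2_eq_square)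
  also have "\<dots> \<le> 2 + c * L / sqrt (L / real T)"
    using D eps L \<open>0 < D\<close> by (intro add_mono divide_left_mono) (auto simp: c_def L_def)
  also have "c * L / sqrt (L / real T) = c * sqrt (real T * L)"
    using div_sqrt_div_eq[of "real T" L] T L by (metis of_nat_0_less_iff times_divide_eq_right
        less_le_trans pos2)
  finally show ?thesis by (simp add: c_def L_def)
qed

lemma expected_pseudo_regret_le_bad_tuples:
  fixes T :: nat
  assumes astar: "astar \<in> arm_tuples Ks" and opt: "\<forall>b\<in>arm_tuples Ks. mean b \<le> mean astar"
    and T: "2 \<le> T" and K: "2 \<le> prod_list Ks"
  defines "\<epsilon> \<equiv> sqrt (ln (real T) / real T)"
  defines "Bad \<equiv> {a. a \<in> arm_tuples Ks \<and> \<epsilon> < mean astar - mean a}"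
  shows "(\<integral>\<omega>. (\<Sum>t=1..T. mean astar - mean (action t \<omega>)) \<partial>P) \<le> real (prod_list Ks) + 1
           + real (card Bad) * 2 + (1 + real (card Bad) * (6 + 4 * sqrt 2)) * sqrt (real T * ln (real T))"
proof -
  define c where "c = 6 + 4 * sqrt (2::real)"
  define root where "root = sqrt (real T * ln (real T))"
  have "0 \<le> \<epsilon>" using T by (simp add: \<epsilon>_def)
  have "(\<integral>\<omega>. (\<Sum>t=1..T. mean astar - mean (action t \<omega>)) \<partial>P) \<le> real (prod_list Ks) + \<epsilon> * real T
      + (\<Sum>t\<in>{prod_list Ks..<T}. \<Sum>n\<in>{1..t}.
           prob {\<omega>\<in>space P. first_rewards_dev Ks (reward \<omega>) mean T astar n < - conf_radius t n})
      + (\<Sum>a\<in>Bad. (mean astar - mean a) * (1 + (\<Sum>n\<in>{1..T}. prob {\<omega>\<in>space P.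
           real n * (mean astar - mean a) - conf_radius T n \<le> first_rewards_dev Ks (reward \<omega>) mean T a n})))"
    unfolding Bad_def by (rule expected_pseudo_regret_decomposition[OF astar opt \<open>0 \<le> \<epsilon>\<close>])
  also have "(\<Sum>t\<in>{prod_list Ks..<T}. \<Sum>n\<in>{1..t}.
      prob {\<omega>\<in>space P. first_rewards_dev Ks (reward \<omega>) mean T astar n < - conf_radius t n}) \<le> 1"
    by (rule sum_prob_first_rewards_dev_below_radius_le_1[OF astar K])
  also have "(\<Sum>a\<in>Bad. (mean astar - mean a) * (1 + (\<Sum>n\<in>{1..T}. prob {\<omega>\<in>space P.
           real n * (mean astar - mean a) - conf_radius T n \<le> first_rewards_dev Ks (reward \<omega>) mean T a n})))
      \<le> (\<Sum>a\<in>Bad. 2 + c * root)"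
  proof (rule sum_mono)
    fix a assume "a \<in> Bad"
    then have a: "a \<in> arm_tuples Ks" "\<epsilon> < mean astar - mean a" by (auto simp: Bad_def)
    have "mean astar - mean a \<le> 1" using mean_bounds[OF a(1)] mean_bounds[OF astar] by linarith
    then show "(mean astar - mean a) * (1 + (\<Sum>n\<in>{1..T}. prob {\<omega>\<in>space P.
           real n * (mean astar - mean a) - conf_radius T n \<le> first_rewards_dev Ks (reward \<omega>) mean T a n}))
        \<le> 2 + c * root"
      using suboptimal_cost_le[OF a(1) T] a(2) by (simp add: \<epsilon>_def c_def root_def)
  qed
  also have "\<epsilon> * real T = root"
    using T mult_sqrt_div_eq[of "real T"] by (simp add: \<epsilon>_def root_def mult.commute)
  finally show ?thesis by (simp add: c_def root_def algebra_simps)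
qed

lemma expected_pseudo_regret_le_gap_bound:
  assumes "\<forall>b\<in>arm_tuples Ks. m - mean b \<le> c"
  shows "(\<integral>\<omega>. (\<Sum>t=1..T. m - mean (action t \<omega>)) \<partial>P) \<le> real T * c"
proof (rule integral_le_const)
  show "integrable P (\<lambda>\<omega>. \<Sum>t=1..T. m - mean (action t \<omega>))"
    by (intro Bochner_Integration.integrable_sum Bochner_Integration.integrable_diff
        integrable_const integrable_mean_action)
  have "(\<Sum>t=1..T. m - mean (action t \<omega>)) \<le> (\<Sum>t=1..T. c)" for \<omega>
    using assms action_in_arm_tuples by (intro sum_mono) blast
  then show "AE \<omega> in P. (\<Sum>t=1..T. m - mean (action t \<omega>)) \<le> real T * c" by simp
qed

theorem expected_pseudo_regret_bound:
  fixes T :: nat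
  defines "m \<equiv> Max (mean ` arm_tuples Ks)" and "\<epsilon> \<equiv> sqrt (ln (real T) / real T)"
  shows "(\<integral>\<omega>. (\<Sum>t=1..T. m - mean (action t \<omega>)) \<partial>P) \<le> 3 * real (prod_list Ks) +
           (1 + (\<Sum>a | a \<in> arm_tuples Ks \<and> \<epsilon> < m - mean a. 6 + 4 * sqrt 2)) * sqrt (real T * ln (real T))"
proof -
  define K where "K = prod_list Ks"
  define Bad where "Bad = {a. a \<in> arm_tuples Ks \<and> \<epsilon> < m - mean a}"
  define root where "root = sqrt (real T * ln (real T))"
  have "m \<in> mean ` arm_tuples Ks" using arm_tuples_finite arm_tuples_nonempty by (simp add: m_def)
  then obtain astar where astar: "astar \<in> arm_tuples Ks" "mean astar = m" by auto
  have opt: "\<forall>b\<in>arm_tuples Ks. mean b \<le> mean astar" using arm_tuples_finite astar by (simp add: m_def)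
  have "0 \<le> root" by (cases "T = 0") (simp_all add: root_def)
  then have rhs: "root \<le> (1 + real (card Bad) * (6 + 4 * sqrt 2)) * root"
    by (simp add: algebra_simps)
  have K: "1 \<le> real K" using prod_list_ge_1 by (simp add: K_def)
  consider "T \<le> 1" | "2 \<le> T" "Bad = {}" | "2 \<le> T" "Bad \<noteq> {}" by linarith
  then have bound: "(\<integral>\<omega>. (\<Sum>t=1..T. m - mean (action t \<omega>)) \<partial>P)
      \<le> 3 * real K + (1 + real (card Bad) * (6 + 4 * sqrt 2)) * root"
  proof cases
    case 1
    have "\<forall>b\<in>arm_tuples Ks. m - mean b \<le> 1"
      using mean_bounds astar by (metis diff_le_eq add.commute add_increasing2)
    then have "(\<integral>\<omega>. (\<Sum>t=1..T. m - mean (action t \<omega>)) \<partial>P) \<le> real T"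
      using expected_pseudo_regret_le_gap_bound[of m 1] by simp
    moreover have "real T \<le> 1" using 1 by simp
    ultimately show ?thesis using K rhs \<open>0 \<le> root\<close> by linarith
  next
    case 2
    then have "\<forall>b\<in>arm_tuples Ks. m - mean b \<le> \<epsilon>" by (auto simp: Bad_def not_less)
    then have "(\<integral>\<omega>. (\<Sum>t=1..T. m - mean (action t \<omega>)) \<partial>P) \<le> real T * \<epsilon>"
      by (rule expected_pseudo_regret_le_gap_bound)
    also have "\<dots> = root" using 2 mult_sqrt_div_eq[of "real T"] by (simp add: \<epsilon>_def root_def)
    finally show ?thesis using K rhs by linarith
  next
    case 3
    have "0 \<le> \<epsilon>" using 3 by (simp add: \<epsilon>_def)
    then have "card Bad < K"
      unfolding K_def using astar by (intro card_less_prod_list) (auto simp: Bad_def)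
    moreover have "0 < card Bad" using 3 arm_tuples_finite by (simp add: Bad_def card_gt_0_iff)
    ultimately have "2 \<le> prod_list Ks" "real (card Bad) + 1 \<le> real K" by (simp_all add: K_def)
    from expected_pseudo_regret_le_bad_tuples[OF astar(1) opt \<open>2 \<le> T\<close> this(1)]
    have "(\<integral>\<omega>. (\<Sum>t=1..T. m - mean (action t \<omega>)) \<partial>P)
        \<le> real K + 1 + real (card Bad) * 2 + (1 + real (card Bad) * (6 + 4 * sqrt 2)) * root"
      unfolding astar(2) by (simp only: K_def Bad_def root_def \<epsilon>_def)
    then show ?thesis using \<open>real (card Bad) + 1 \<le> real K\<close> by linarith
  qed
  moreover have "(\<Sum>a | a \<in> arm_tuples Ks \<and> \<epsilon> < m - mean a. 6 + 4 * sqrt 2) = real (card Bad) * (6 + 4 * sqrt 2)"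
    by (simp add: Bad_def)
  ultimately show ?thesis by (simp only: K_def root_def)
qed

end

theorem theorem2:
  fixes Ks :: "nat list" and T :: nat
    and P :: "'w measure"
    and X :: "nat list \<Rightarrow> nat \<Rightarrow> 'w \<Rightarrow> real"
    and F :: "nat list \<Rightarrow> real measure"
  assumes Kpos: "\<forall>i<length Ks. 1 \<le> Ks!i"
    and prob: "prob_space P"
    and meas: "\<And>a t. a \<in> arm_tuples Ks \<Longrightarrow> X a t \<in> borel_measurable P"
    and distr: "\<And>a t. a \<in> arm_tuples Ks \<Longrightarrow> distr P borel (X a t) = F a"
    and indep: "prob_space.indep_vars P (\<lambda>_. PiM (arm_tuples Ks) (\<lambda>_. borel))
                  (\<lambda>t \<omega>. restrict (\<lambda>a. X a t \<omega>) (arm_tuples Ks)) UNIV"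
    and supp: "\<And>a. a \<in> arm_tuples Ks \<Longrightarrow> AE x in F a. x \<in> {0..1}"
    and subg: "\<And>a. a \<in> arm_tuples Ks \<Longrightarrow> subgaussian 1 (F a)"
  defines "\<mu> \<equiv> \<lambda>a. \<integral>x. x \<partial>(F a)"
  defines "\<mu>star \<equiv> Max (\<mu> ` arm_tuples Ks)"
  defines "\<Delta> \<equiv> \<lambda>a. \<mu>star - \<mu> a"
  defines "R \<equiv> \<integral>\<omega>. (real T * \<mu>star -
                (\<Sum>t=1..T. X (mucb_action Ks (\<lambda>a s. X a s \<omega>) t) t \<omega>)) \<partial>P"
  defines "\<epsilon> \<equiv> sqrt (ln (real T) / real T)"
  shows "R \<le> 3 * real (prod_list Ks) +
           (1 + (\<Sum>a | a \<in> arm_tuples Ks \<and> \<Delta> a > \<epsilon>. 6 + 4 * sqrt 2))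
             * sqrt (real T * ln (real T))"
proof -
  interpret bandit Ks P X F
    by (rule bandit.intro[OF mucb.intro[OF Kpos] prob bandit_axioms.intro[OF meas distr indep supp]])
  have \<mu>: "\<mu> = mean" by (simp add: \<mu>_def mean_def fun_eq_iff)
  have "R = (\<integral>\<omega>. (\<Sum>t=1..T. \<mu>star - mean (action t \<omega>)) \<partial>P)"
    unfolding R_def by (rule regret_eq_expected_pseudo_regret)
  also have "\<dots> \<le> 3 * real (prod_list Ks) +
      (1 + (\<Sum>a | a \<in> arm_tuples Ks \<and> \<epsilon> < \<mu>star - mean a. 6 + 4 * sqrt 2)) * sqrt (real T * ln (real T))"
    unfolding \<mu>star_def \<mu> \<epsilon>_def by (rule expected_pseudo_regret_bound)
  finally show ?thesis by (simp only: \<Delta>_def \<mu>)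
qed

end
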